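(* Let $d\ge1$, $n\ge1$, $t>0$, $x\in\mathbb{R}^d$, and let $\psi^{*(n)}$ be defined as in the context for the kernel $f$. (i) Suppose $f$ is the Riesz kernel of order $\alpha\in(0,d)$ or the Bessel kernel of order $\alpha\in(0,d)$, and let $D_{\alpha,d}>0$ be a constant such that $J_f(u,v,y,z)\le D_{\alpha,d}(u+v)^{-(d-\alpha)/2}$ for all $u,v>0$, $y,z\in\mathbb{R}^d$. Then for all $\mathbf{s},\mathbf{t}\in(0,t)^n$ with pairwise distinct coordinates, $$\psi^{*(n)}(\mathbf{s},\mathbf{t})\le\Big(D_{\alpha,d}2^{-(d-\alpha)/2}\Big)^n\,[\beta(\mathbf{s})\beta(\mathbf{t})]^{-(d-\alpha)/4},$$ where $\beta(\mathbf{s})=\prod_{j=1}^n(s_{\sigma(j+1)}-s_{\sigma(j)})$ and $\beta(\mathbf{t})=\prod_{j=1}^n(t_{\rho(j+1)}-t_{\rho(j)})$. (ii) Suppose $f$ is the heat kernel of order $\alpha>0$ or the Poisson kernel of order $\alpha>0$. Then there is a constant $C_{\alpha,d}$ depending on $\alpha,d$ such that $\psi^{*(n)}(\mathbf{s},\mathbf{t})\le C_{\alpha,d}^n$ for all such $\mathbf{s},\mathbf{t}$.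
   Context: $p_t(x)=(2\pi t)^{-d/2}e^{-|x|^2/(2t)}$ is the heat kernel; $J_f(u,v,y,z)=\int\int p_u(x-y)p_v(x'-z)f(x-x')dx\,dx'$. Kernels: Riesz of order $\alpha\in(0,d)$: $f(x)=\gamma_{\alpha,d}|x|^{-d+\alpha}$, $\gamma_{\alpha,d}=\Gamma((d-\alpha)/2)2^{-\alpha}\pi^{-d/2}/\Gamma(\alpha/2)$; Bessel of order $\alpha>0$: $f(x)=\gamma'_\alpha\int_0^\infty w^{(\alpha-d)/2-1}e^{-w}e^{-|x|^2/(4w)}dw$, $\gamma'_\alpha=(4\pi)^{\alpha/2}\Gamma(\alpha/2)$; heat of order $\alpha$: $f(x)=(2\pi\alpha)^{-d/2}e^{-|x|^2/(2\alpha)}$; Poisson of order $\alpha$: $f(x)=C_d\alpha(|x|^2+\alpha^2)^{-(d+1)/2}$, $C_d=\pi^{-(d+1)/2}\Gamma((d+1)/2)$. For $\mathbf{s}=(s_1,\dots,s_n),\mathbf{t}=(t_1,\dots,t_n)\in(0,t)^n$ with pairwise distinct coordinates, let $\rho,\sigma$ be the permutations of $\{1,\dots,n\}$ with $t_{\rho(1)}<\dots<t_{\rho(n)}$ and $s_{\sigma(1)}<\dots<s_{\sigma(n)}$; set $t_{\rho(n+1)}=s_{\sigma(n+1)}=t$ and $x_{\rho(n+1)}=y_{\sigma(n+1)}=x$, and $$\psi^{*(n)}(\mathbf{s},\mathbf{t})=\int_{\mathbb{R}^{2nd}}\prod_{j=1}^nf(x_j-y_j)\prod_{j=1}^np_{t_{\rho(j+1)}-t_{\rho(j)}}(x_{\rho(j+1)}-x_{\rho(j)})\prod_{j=1}^np_{s_{\sigma(j+1)}-s_{\sigma(j)}}(y_{\sigma(j+1)}-y_{\sigma(j)})\,d\mathbf{x}\,d\mathbf{y},$$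 with $\mathbf{x}=(x_1,\dots,x_n),\mathbf{y}=(y_1,\dots,y_n)\in(\mathbb{R}^d)^n$. *)

theory Defs
  imports "HOL-Analysis.Analysis"
begin

text \<open>The space R^d is modelled by a Euclidean space type 'a with d = DIM('a).
Vectors (x_1..x_n), (s_1..s_n) are functions on nat, used on indices 0..n-1 (0-based).\<close>

definition heat :: "real \<Rightarrow> 'a::euclidean_space \<Rightarrow> real" where
  "heat t x = (2 * pi * t) powr (- (real DIM('a) / 2)) * exp (- (norm x)\<^sup>2 / (2 * t))"

definition Jf :: "('a::euclidean_space \<Rightarrow> real) \<Rightarrow> real \<Rightarrow> real \<Rightarrow> 'a \<Rightarrow> 'a \<Rightarrow> ennreal" where
  "Jf f u v y z = (\<integral>\<^sup>+ x. \<integral>\<^sup>+ x'. ennreal (heat u (x - y) * heat v (x' - z) * f (x - x')) \<partial>lborel \<partial>lborel)"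

definition riesz :: "real \<Rightarrow> 'a::euclidean_space \<Rightarrow> real" where
  "riesz \<alpha> x = (let d = real DIM('a) in
     Gamma ((d - \<alpha>) / 2) * 2 powr (- \<alpha>) * pi powr (- d / 2) / Gamma (\<alpha> / 2)
     * norm x powr (- d + \<alpha>))"

definition bessel :: "real \<Rightarrow> 'a::euclidean_space \<Rightarrow> real" where
  "bessel \<alpha> x = (let d = real DIM('a) in
     (4 * pi) powr (\<alpha> / 2) * Gamma (\<alpha> / 2) *
     set_lebesgue_integral lborel {0<..}
       (\<lambda>w. w powr ((\<alpha> - d) / 2 - 1) * exp (- w) * exp (- (norm x)\<^sup>2 / (4 * w))))"

definition heatk :: "real \<Rightarrow> 'a::euclidean_space \<Rightarrow> real" where
  "heatk \<alpha> x = (2 * pi * \<alpha>) powr (- (real DIM('a) / 2)) * exp (- (norm x)\<^sup>2 / (2 * \<alpha>))"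

definition poisson :: "real \<Rightarrow> 'a::euclidean_space \<Rightarrow> real" where
  "poisson \<alpha> x = (let d = real DIM('a) in
     pi powr (- (d + 1) / 2) * Gamma ((d + 1) / 2) * \<alpha> * ((norm x)\<^sup>2 + \<alpha>\<^sup>2) powr (- (d + 1) / 2))"

definition sort_perm :: "nat \<Rightarrow> (nat \<Rightarrow> real) \<Rightarrow> nat \<Rightarrow> nat" where
  "sort_perm n t = (THE \<rho>. bij_betw \<rho> {..<n} {..<n}
      \<and> (\<forall>i j. i < j \<and> j < n \<longrightarrow> t (\<rho> i) < t (\<rho> j))
      \<and> (\<forall>i. n \<le> i \<longrightarrow> \<rho> i = i))"

definition sorted_ext :: "nat \<Rightarrow> real \<Rightarrow> (nat \<Rightarrow> real) \<Rightarrow> nat \<Rightarrow> real" where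
  "sorted_ext n T t j = (if j < n then t (sort_perm n t j) else T)"

definition reord_ext :: "nat \<Rightarrow> (nat \<Rightarrow> real) \<Rightarrow> 'b \<Rightarrow> (nat \<Rightarrow> 'b) \<Rightarrow> nat \<Rightarrow> 'b" where
  "reord_ext n t x xs j = (if j < n then xs (sort_perm n t j) else x)"

definition psi :: "('a::euclidean_space \<Rightarrow> real) \<Rightarrow> nat \<Rightarrow> real \<Rightarrow> 'a \<Rightarrow>
    (nat \<Rightarrow> real) \<Rightarrow> (nat \<Rightarrow> real) \<Rightarrow> ennreal" where
  "psi f n T x s t =
    (\<integral>\<^sup>+ xs. \<integral>\<^sup>+ ys. ennreal (
        (\<Prod>j<n. f (xs j - ys j))
      * (\<Prod>j<n. heat (sorted_ext n T t (Suc j) - sorted_ext n T t j)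
                      (reord_ext n t x xs (Suc j) - reord_ext n t x xs j))
      * (\<Prod>j<n. heat (sorted_ext n T s (Suc j) - sorted_ext n T s j)
                      (reord_ext n s x ys (Suc j) - reord_ext n s x ys j)))
     \<partial>(PiM {..<n} (\<lambda>_. (lborel :: 'a measure)))
     \<partial>(PiM {..<n} (\<lambda>_. (lborel :: 'a measure))))"

definition beta :: "nat \<Rightarrow> real \<Rightarrow> (nat \<Rightarrow> real) \<Rightarrow> real" where
  "beta n T s = (\<Prod>j<n. sorted_ext n T s (Suc j) - sorted_ext n T s j)"

definition admissible :: "nat \<Rightarrow> real \<Rightarrow> (nat \<Rightarrow> real) \<Rightarrow> bool" where
  "admissible n T s \<longleftrightarrow> (\<forall>i<n. 0 < s i \<and> s i < T) \<and> inj_on s {..<n}"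

end

theory Submission
  imports Defs "HOL-Probability.Probability"
begin

text \<open>Replace \<open>f (w - z)\<close> by a two-point kernel \<open>G w z \<ge> f (w - z)\<close> of the form
\<open>G w z = \<integral> K \<theta> w * K \<theta> z d\<theta>\<close>: a superposition of Gaussians for the Riesz and Bessel kernels,
a constant for bounded kernels. Then \<open>\<psi>(s, t)\<close> becomes an \<open>L\<^sup>2\<close> inner product of two functions
of \<open>\<theta>\<close>, and Cauchy-Schwarz gives \<open>\<psi>(s, t)\<^sup>2 \<le> \<psi>(s, s) \<psi>(t, t)\<close>. On the diagonal both chains
run with the same time increments \<open>u\<^sub>j\<close>, so integrating out the earliest pair of points
produces a factor \<open>J_f(u\<^sub>j, u\<^sub>j, \<cdot>, \<cdot>) \<le> D (2 u\<^sub>j)\<^bsup>-(d-\<alpha>)/2\<^esup>\<close>; iterating bounds \<open>\<psi>(s, s)\<close>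
by \<open>(D 2\<^bsup>-(d-\<alpha>)/2\<^esup>)\<^sup>n \<beta>(s)\<^bsup>-(d-\<alpha>)/2\<^esup>\<close>. Since \<open>G\<close> and \<open>f\<close> differ only on the diagonal,
a null set, \<open>J\<close> does not see the difference.\<close>

subsection \<open>Gaussian integrals\<close>

lemma nn_integral_exp_neg_square:
  fixes b m :: real assumes b: "b > 0"
  shows "(\<integral>\<^sup>+t. ennreal (exp (- b * (t - m)\<^sup>2)) \<partial>lborel) = ennreal (sqrt (pi / b))"
proof -
  define \<sigma> where "\<sigma> = sqrt (1 / (2 * b))"
  have s: "\<sigma> > 0" "\<sigma>\<^sup>2 = 1 / (2*b)" using b by (auto simp: \<sigma>_def)
  have nd: "normal_density m \<sigma> t = sqrt (b / pi) * exp (- b * (t - m)\<^sup>2)" for t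
    using b s unfolding normal_density_def
    by (simp add: s(2) field_simps real_sqrt_divide)
  have "(\<integral>\<^sup>+t. ennreal (normal_density m \<sigma> t) \<partial>lborel) = 1"
    by (subst nn_integral_eq_integral) (auto simp: s)
  hence "ennreal (sqrt (b / pi)) * (\<integral>\<^sup>+t. ennreal (exp (- b * (t - m)\<^sup>2)) \<partial>lborel) = 1"
    using b by (simp add: nd ennreal_mult nn_integral_cmult)
  moreover have "ennreal (sqrt (pi / b)) * ennreal (sqrt (b / pi)) = 1"
    using b by (simp add: ennreal_mult'[symmetric] real_sqrt_mult[symmetric])
  ultimately show ?thesis by (metis mult.assoc mult_1_left mult_1_right)
qed

lemma nn_integral_exp_neg_norm_square:
  fixes m :: "'a::euclidean_space" and b :: real assumes b: "b > 0"
  shows "(\<integral>\<^sup>+z. ennreal (exp (- b * (norm (z - m))\<^sup>2)) \<partial>(lborel::'a measure))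
       = ennreal ((pi / b) powr (real DIM('a) / 2))"
proof -
  have eq: "ennreal (exp (- b * (norm (z - m))\<^sup>2)) = (\<Prod>e\<in>Basis. ennreal (exp (- b * (z \<bullet> e - m \<bullet> e)\<^sup>2)))" for z
  proof -
    have "(norm (z - m))\<^sup>2 = (\<Sum>e\<in>Basis. (z \<bullet> e - m \<bullet> e)\<^sup>2)"
      unfolding power2_norm_eq_inner by (subst euclidean_inner) (simp add: power2_eq_square inner_diff_left)
    hence "exp (- b * (norm (z - m))\<^sup>2) = exp (\<Sum>e\<in>Basis. - b * (z \<bullet> e - m \<bullet> e)\<^sup>2)"
      by (simp add: sum_distrib_left)
    also have "\<dots> = (\<Prod>e\<in>Basis. exp (- b * (z \<bullet> e - m \<bullet> e)\<^sup>2))"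
      by (rule exp_sum) simp
    finally show ?thesis by (simp add: prod_ennreal)
  qed
  have "(\<integral>\<^sup>+z. ennreal (exp (- b * (norm (z - m))\<^sup>2)) \<partial>(lborel::'a measure))
      = (\<Prod>e\<in>(Basis::'a set). (\<integral>\<^sup>+t. ennreal (exp (- b * (t - m \<bullet> e)\<^sup>2)) \<partial>lborel))"
    unfolding eq by (rule nn_integral_lborel_prod) auto
  also have "\<dots> = (\<Prod>e\<in>(Basis::'a set). ennreal (sqrt (pi / b)))"
    by (intro prod.cong refl nn_integral_exp_neg_square[OF b])
  also have "\<dots> = ennreal (sqrt (pi / b) ^ DIM('a))"
    using b by (simp add: ennreal_power[symmetric])
  also have "sqrt (pi / b) ^ DIM('a) = (pi / b) powr (real DIM('a) / 2)"
    using b by (simp add: powr_half_sqrt[symmetric] powr_realpow[symmetric] powr_powr)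
  finally show ?thesis .
qed

lemma heat_nonneg: "0 \<le> heat u x"
  unfolding heat_def by simp

lemma heat_minus_commute: "heat u (a - b) = heat u (b - a)"
  unfolding heat_def by (simp add: norm_minus_commute)

lemma borel_measurable_heat[measurable]: "heat u \<in> borel_measurable borel"
  unfolding heat_def[abs_def] by measurable

lemma nn_integral_heat:
  fixes y :: "'a::euclidean_space" assumes u: "u > 0"
  shows "(\<integral>\<^sup>+x. ennreal (heat u (x - y)) \<partial>lborel) = 1"
proof -
  have "(\<integral>\<^sup>+x. ennreal (heat u (x - y)) \<partial>lborel)
     = (\<integral>\<^sup>+x. ennreal ((2 * pi * u) powr (- (real DIM('a) / 2))) * ennreal (exp (- (1 / (2 * u)) * (norm (x - y))\<^sup>2)) \<partial>lborel)"
    unfolding heat_def using u by (intro nn_integral_cong) (simp add: ennreal_mult[symmetric])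
  also have "\<dots> = ennreal ((2 * pi * u) powr (- (real DIM('a) / 2))) * ennreal ((pi / (1 / (2 * u))) powr (real DIM('a) / 2))"
    using u by (subst nn_integral_cmult, simp, subst nn_integral_exp_neg_norm_square, auto)
  also have "\<dots> = 1"
    using u by (simp add: ennreal_mult[symmetric] powr_minus field_simps)
  finally show ?thesis .
qed

lemma norm_square_sum_eq_midpoint:
  fixes x y z :: "'a::real_inner"
  shows "(norm (x - z))\<^sup>2 + (norm (y - z))\<^sup>2 = 2 * (norm (z - (1/2) *\<^sub>R (x + y)))\<^sup>2 + (norm (x - y))\<^sup>2 / 2"
  by (simp add: power2_norm_eq_inner inner_simps inner_commute algebra_simps) (simp add: field_simps)

lemma nn_integral_exp_neg_norm_square_product:
  fixes x y :: "'a::euclidean_space" assumes a: "a > 0"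
  shows "(\<integral>\<^sup>+z. ennreal (exp (- a * (norm (x - z))\<^sup>2) * exp (- a * (norm (y - z))\<^sup>2)) \<partial>lborel)
       = ennreal ((pi / (2 * a)) powr (real DIM('a) / 2) * exp (- (a / 2) * (norm (x - y))\<^sup>2))"
proof -
  have "exp (- a * (norm (x - z))\<^sup>2) * exp (- a * (norm (y - z))\<^sup>2)
      = exp (- (a / 2) * (norm (x - y))\<^sup>2) * exp (- (2 * a) * (norm (z - (1/2) *\<^sub>R (x + y)))\<^sup>2)" for z
  proof -
    have "exp (- a * (norm (x - z))\<^sup>2) * exp (- a * (norm (y - z))\<^sup>2)
        = exp (- a * ((norm (x - z))\<^sup>2 + (norm (y - z))\<^sup>2))"
      by (simp add: exp_add[symmetric] algebra_simps)
    also have "\<dots> = exp (- (a / 2) * (norm (x - y))\<^sup>2 + - (2 * a) * (norm (z - (1/2) *\<^sub>R (x + y)))\<^sup>2)"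
      unfolding norm_square_sum_eq_midpoint by (simp add: algebra_simps)
    finally show ?thesis by (simp only: exp_add)
  qed
  hence "(\<integral>\<^sup>+z. ennreal (exp (- a * (norm (x - z))\<^sup>2) * exp (- a * (norm (y - z))\<^sup>2)) \<partial>lborel)
     = (\<integral>\<^sup>+z. ennreal (exp (- (a / 2) * (norm (x - y))\<^sup>2)) * ennreal (exp (- (2 * a) * (norm (z - (1/2) *\<^sub>R (x + y)))\<^sup>2)) \<partial>lborel)"
    by (intro nn_integral_cong) (simp add: ennreal_mult[symmetric])
  also have "\<dots> = ennreal (exp (- (a / 2) * (norm (x - y))\<^sup>2)) * ennreal ((pi / (2 * a)) powr (real DIM('a) / 2))"
    using a by (subst nn_integral_cmult, simp, subst nn_integral_exp_neg_norm_square, auto)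
  finally show ?thesis by (simp add: ennreal_mult[symmetric] mult.commute)
qed

lemma nn_integral_Gamma_scaled:
  fixes s l :: real assumes s: "s > 0" and l: "l > 0"
  shows "(\<integral>\<^sup>+r. ennreal (indicator {0<..} r * r powr (s - 1) * exp (- (l * r))) \<partial>lborel) = ennreal (Gamma s * l powr (- s))"
proof -
  define I where "I = (\<integral>\<^sup>+r. ennreal (indicator {0<..} r * r powr (s - 1) * exp (- (l * r))) \<partial>lborel)"
  have "ennreal (Gamma s) = (\<integral>\<^sup>+t. ennreal (indicator {0..} t * t powr (s - 1) / exp t) \<partial>lborel)"
    by (rule Gamma_conv_nn_integral_real[OF s])
  also have "\<dots> = ennreal \<bar>l\<bar> * (\<integral>\<^sup>+r. ennreal (indicator {0..} (0 + l * r) * (0 + l * r) powr (s - 1) / exp (0 + l * r)) \<partial>lborel)"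
    by (rule nn_integral_real_affine) (use l in auto)
  also have "(\<integral>\<^sup>+r. ennreal (indicator {0..} (0 + l * r) * (0 + l * r) powr (s - 1) / exp (0 + l * r)) \<partial>lborel)
      = (\<integral>\<^sup>+r. ennreal (l powr (s - 1)) * ennreal (indicator {0<..} r * r powr (s - 1) * exp (- (l * r))) \<partial>lborel)"
  proof (intro nn_integral_cong)
    fix r :: real
    show "ennreal (indicator {0..} (0 + l * r) * (0 + l * r) powr (s - 1) / exp (0 + l * r))
        = ennreal (l powr (s - 1)) * ennreal (indicator {0<..} r * r powr (s - 1) * exp (- (l * r)))"
    proof (cases "r > 0")
      case True
      then show ?thesis using l
        by (simp add: ennreal_mult[symmetric] powr_mult exp_minus field_simps indicator_def)
    next
      case False
      then have "r = 0 \<or> r < 0" by auto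
      then show ?thesis using l
        by (auto simp: indicator_def zero_le_mult_iff)
    qed
  qed
  also have "\<dots> = ennreal (l powr (s - 1)) * I"
    unfolding I_def by (rule nn_integral_cmult) simp
  finally have "ennreal (Gamma s) = ennreal (l * l powr (s - 1)) * I"
    using l by (simp add: ennreal_mult mult.assoc)
  also have "l * l powr (s - 1) = l powr s" using l by (simp add: powr_diff field_simps powr_minus)
  finally have eq: "ennreal (Gamma s) = ennreal (l powr s) * I" .
  have "ennreal (Gamma s * l powr (- s)) = ennreal (l powr (- s)) * ennreal (Gamma s)"
    using l Gamma_real_pos[OF s] by (simp add: ennreal_mult[symmetric] mult.commute)
  also have "\<dots> = (ennreal (l powr (- s)) * ennreal (l powr s)) * I"
    by (simp add: eq mult.assoc)
  also have "ennreal (l powr (- s)) * ennreal (l powr s) = 1"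
    using l by (simp add: ennreal_mult[symmetric] powr_minus)
  finally show ?thesis by (simp add: I_def)
qed

subsection \<open>Products of Lebesgue measure\<close>

text \<open>Outside the index set \<open>I\<close> every point of \<open>PiM I\<close> has the value \<open>undefined\<close>, so the projection
to any coordinate is measurable.\<close>

lemma measurable_component_PiM_any:
  assumes "space M = UNIV"
  shows "(\<lambda>\<omega>. \<omega> k) \<in> measurable (PiM I (\<lambda>_. M)) M"
proof (cases "k \<in> I")
  case True then show ?thesis by measurable
next
  case False
  have "(\<lambda>\<omega>::_ \<Rightarrow> 'a. (undefined::'a)) \<in> measurable (PiM I (\<lambda>_. M)) M"
    using assms by (intro measurable_const) auto
  moreover have "\<omega> k = undefined" if "\<omega> \<in> space (PiM I (\<lambda>_. M))" for \<omega>
    using that False by (auto simp: space_PiM PiE_def extensional_def)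
  ultimately show ?thesis
    by (subst measurable_cong[where g="\<lambda>_. undefined"]) auto
qed

lemma borel_measurable_component_PiM_lborel[measurable]:
  "(\<lambda>\<omega>. \<omega> k) \<in> borel_measurable (PiM I (\<lambda>_. (lborel::'a::euclidean_space measure)))"
  using measurable_component_PiM_any[of "lborel::'a measure" k I] by simp

lemma product_sigma_finite_lborel: "product_sigma_finite (\<lambda>_. (lborel::'a::euclidean_space measure))"
  by (simp add: product_sigma_finite_def sigma_finite_lborel)

lemma sigma_finite_PiM_lborel:
  "finite I \<Longrightarrow> sigma_finite_measure (PiM I (\<lambda>_. (lborel::'a::euclidean_space measure)))"
  using product_sigma_finite.sigma_finite[OF product_sigma_finite_lborel] by blast

lemma distr_PiM_permute:
  fixes M :: "'b measure"
  assumes sf: "sigma_finite_measure M" and I: "finite I" and \<sigma>: "bij_betw \<sigma> I I"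
  shows "distr (PiM I (\<lambda>_. M)) (PiM I (\<lambda>_. M)) (\<lambda>\<omega>. \<lambda>i\<in>I. \<omega> (\<sigma> i)) = PiM I (\<lambda>_. M)"
proof -
  interpret product_sigma_finite "\<lambda>_. M" using sf by (simp add: product_sigma_finite_def)
  have \<sigma>I: "\<sigma> i \<in> I" if "i \<in> I" for i using \<sigma> that by (auto simp: bij_betw_def)
  have gm: "(\<lambda>\<omega>. \<lambda>i\<in>I. \<omega> (\<sigma> i)) \<in> measurable (PiM I (\<lambda>_. M)) (PiM I (\<lambda>_. M))"
    by (rule measurable_restrict) (use \<sigma>I in auto)
  define \<tau> where "\<tau> = the_inv_into I \<sigma>"
  have \<tau>: "bij_betw \<tau> I I" unfolding \<tau>_def by (rule bij_betw_the_inv_into[OF \<sigma>])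
  have \<sigma>\<tau>: "\<sigma> (\<tau> j) = j" if "j \<in> I" for j
    using \<sigma> that unfolding \<tau>_def by (simp add: bij_betw_def f_the_inv_into_f)
  have \<tau>\<sigma>: "\<tau> (\<sigma> j) = j" if "j \<in> I" for j
    using \<sigma> that unfolding \<tau>_def by (simp add: bij_betw_def the_inv_into_f_f)
  have \<tau>I: "\<tau> i \<in> I" if "i \<in> I" for i using \<tau> that by (auto simp: bij_betw_def)
  show ?thesis
  proof (rule PiM_eqI)
    fix A assume A: "\<And>i. i \<in> I \<Longrightarrow> A i \<in> sets M"
    have pre: "(\<lambda>\<omega>. \<lambda>i\<in>I. \<omega> (\<sigma> i)) -` Pi\<^sub>E I A \<inter> space (PiM I (\<lambda>_. M)) = Pi\<^sub>E I (\<lambda>j. A (\<tau> j))"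
    proof (intro set_eqI iffI)
      fix \<omega> assume "\<omega> \<in> (\<lambda>\<omega>. \<lambda>i\<in>I. \<omega> (\<sigma> i)) -` Pi\<^sub>E I A \<inter> space (PiM I (\<lambda>_. M))"
      then have h: "\<And>i. i \<in> I \<Longrightarrow> \<omega> (\<sigma> i) \<in> A i" and e: "\<omega> \<in> extensional I"
        by (auto simp: space_PiM PiE_def Pi_def)
      show "\<omega> \<in> Pi\<^sub>E I (\<lambda>j. A (\<tau> j))"
        using h[OF \<tau>I] e by (auto simp: PiE_def Pi_def \<sigma>\<tau>)
    next
      fix \<omega> assume w: "\<omega> \<in> Pi\<^sub>E I (\<lambda>j. A (\<tau> j))"
      then have "\<omega> \<in> space (PiM I (\<lambda>_. M))"
        using A[THEN sets.sets_into_space] \<tau>I by (auto simp: space_PiM PiE_def Pi_def)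
      moreover have "\<omega> (\<sigma> i) \<in> A i" if "i \<in> I" for i
        using w \<sigma>I[OF that] \<tau>\<sigma>[OF that] by (metis PiE_iff)
      ultimately show "\<omega> \<in> (\<lambda>\<omega>. \<lambda>i\<in>I. \<omega> (\<sigma> i)) -` Pi\<^sub>E I A \<inter> space (PiM I (\<lambda>_. M))" by simp
    qed
    have "emeasure (distr (PiM I (\<lambda>_. M)) (PiM I (\<lambda>_. M)) (\<lambda>\<omega>. \<lambda>i\<in>I. \<omega> (\<sigma> i))) (Pi\<^sub>E I A)
        = emeasure (PiM I (\<lambda>_. M)) (Pi\<^sub>E I (\<lambda>j. A (\<tau> j)))"
      using A by (subst emeasure_distr[OF gm]) (auto simp: pre intro!: sets_PiM_I_finite I)
    also have "\<dots> = (\<Prod>j\<in>I. emeasure M (A (\<tau> j)))"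
      using A \<tau>I by (subst emeasure_PiM) (auto simp: I)
    also have "\<dots> = (\<Prod>i\<in>I. emeasure M (A i))"
      using prod.reindex_bij_betw[OF \<tau>, of "\<lambda>i. emeasure M (A i)"] by simp
    finally show "emeasure (distr (PiM I (\<lambda>_. M)) (PiM I (\<lambda>_. M)) (\<lambda>\<omega>. \<lambda>i\<in>I. \<omega> (\<sigma> i))) (Pi\<^sub>E I A)
        = (\<Prod>i\<in>I. emeasure M (A i))" .
  qed (simp_all add: I)
qed

lemma nn_integral_PiM_permute:
  fixes M :: "'b measure"
  assumes "sigma_finite_measure M" and "finite I" and \<sigma>: "bij_betw \<sigma> I I"
    and f: "f \<in> borel_measurable (PiM I (\<lambda>_. M))"
  shows "(\<integral>\<^sup>+\<omega>. f \<omega> \<partial>PiM I (\<lambda>_. M)) = (\<integral>\<^sup>+\<omega>. f (\<lambda>i\<in>I. \<omega> (\<sigma> i)) \<partial>PiM I (\<lambda>_. M))"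
proof -
  have gm: "(\<lambda>\<omega>. \<lambda>i\<in>I. \<omega> (\<sigma> i)) \<in> measurable (PiM I (\<lambda>_. M)) (PiM I (\<lambda>_. M))"
    by (rule measurable_restrict) (use bij_betw_apply[OF \<sigma>] in auto)
  have "(\<integral>\<^sup>+\<omega>. f \<omega> \<partial>PiM I (\<lambda>_. M)) = (\<integral>\<^sup>+\<omega>. f \<omega> \<partial>distr (PiM I (\<lambda>_. M)) (PiM I (\<lambda>_. M)) (\<lambda>\<omega>. \<lambda>i\<in>I. \<omega> (\<sigma> i)))"
    by (simp add: distr_PiM_permute[OF assms(1-3)])
  also have "\<dots> = (\<integral>\<^sup>+\<omega>. f (\<lambda>i\<in>I. \<omega> (\<sigma> i)) \<partial>PiM I (\<lambda>_. M))"
    by (rule nn_integral_distr[OF gm]) (use f in simp)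
  finally show ?thesis .
qed

subsection \<open>Sorting permutations\<close>

definition is_sort_perm :: "nat \<Rightarrow> (nat \<Rightarrow> real) \<Rightarrow> (nat \<Rightarrow> nat) \<Rightarrow> bool" where
  "is_sort_perm n t \<rho> \<longleftrightarrow> bij_betw \<rho> {..<n} {..<n}
      \<and> (\<forall>i j. i < j \<and> j < n \<longrightarrow> t (\<rho> i) < t (\<rho> j))
      \<and> (\<forall>i. n \<le> i \<longrightarrow> \<rho> i = i)"

lemma sorted_list_of_set_image_is_sort_perm:
  assumes "is_sort_perm n t \<rho>" and inj: "inj_on t {..<n}"
  shows "sorted_list_of_set (t ` {..<n}) = map (\<lambda>i. t (\<rho> i)) [0..<n]"
proof -
  have b: "bij_betw \<rho> {..<n} {..<n}" and m: "\<And>i j. i < j \<Longrightarrow> j < n \<Longrightarrow> t (\<rho> i) < t (\<rho> j)"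
    using assms by (auto simp: is_sort_perm_def)
  have "set (map (\<lambda>i. t (\<rho> i)) [0..<n]) = t ` \<rho> ` {..<n}"
    by (auto simp: image_image atLeast0LessThan[symmetric])
  also have "\<rho> ` {..<n} = {..<n}" using b by (simp add: bij_betw_def)
  finally have st: "set (map (\<lambda>i. t (\<rho> i)) [0..<n]) = t ` {..<n}" .
  have "card (t ` {..<n}) = n" using inj by (simp add: card_image)
  moreover have "sorted_wrt (<) (map (\<lambda>i. t (\<rho> i)) [0..<n])"
    unfolding sorted_wrt_iff_nth_less using m by auto
  ultimately show ?thesis
    using sorted_list_of_set_unique[of "t ` {..<n}" "map (\<lambda>i. t (\<rho> i)) [0..<n]"] st by simp
qed

lemma is_sort_perm_unique:
  assumes \<rho>1: "is_sort_perm n t \<rho>1" and \<rho>2: "is_sort_perm n t \<rho>2" and inj: "inj_on t {..<n}"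
  shows "\<rho>1 = \<rho>2"
proof (rule ext)
  fix i
  show "\<rho>1 i = \<rho>2 i"
  proof (cases "i < n")
    case True
    have "map (\<lambda>i. t (\<rho>1 i)) [0..<n] = map (\<lambda>i. t (\<rho>2 i)) [0..<n]"
      using sorted_list_of_set_image_is_sort_perm[OF _ inj] \<rho>1 \<rho>2 by metis
    then have "t (\<rho>1 i) = t (\<rho>2 i)" using True by auto
    moreover have "\<rho>1 i \<in> {..<n}" "\<rho>2 i \<in> {..<n}"
      using \<rho>1 \<rho>2 True by (auto simp: is_sort_perm_def dest: bij_betw_apply)
    ultimately show ?thesis by (intro inj_onD[OF inj])
  next
    case False then show ?thesis using \<rho>1 \<rho>2 by (simp add: is_sort_perm_def)
  qed
qed

lemma is_sort_perm_exists:
  assumes inj: "inj_on t {..<n}"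
  shows "\<exists>\<rho>. is_sort_perm n t \<rho>"
proof -
  define L where "L = sorted_list_of_set (t ` {..<n})"
  have lenL: "length L = n" using inj by (simp add: L_def card_image)
  have setL: "set L = t ` {..<n}" by (simp add: L_def)
  have sL: "sorted_wrt (<) L" by (simp add: L_def)
  define \<rho> where "\<rho> i = (if i < n then the_inv_into {..<n} t (L ! i) else i)" for i
  have in_img: "L ! i \<in> t ` {..<n}" if "i < n" for i using that lenL setL nth_mem by metis
  have \<rho>n: "\<rho> i < n" if "i < n" for i
    using that in_img[OF that] inj by (auto simp: \<rho>_def the_inv_into_f_f)
  have t\<rho>: "t (\<rho> i) = L ! i" if "i < n" for i
    using that in_img[OF that] inj by (auto simp: \<rho>_def f_the_inv_into_f)
  have mono: "t (\<rho> i) < t (\<rho> j)" if "i < j" "j < n" for i j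
    using that sL lenL by (simp add: t\<rho> sorted_wrt_iff_nth_less)
  have injr: "inj_on \<rho> {..<n}"
  proof (rule inj_onI)
    fix i j assume "i \<in> {..<n}" "j \<in> {..<n}" "\<rho> i = \<rho> j"
    then show "i = j" using mono[of i j] mono[of j i] by (cases i j rule: linorder_cases) auto
  qed
  have "\<rho> ` {..<n} = {..<n}"
    by (rule endo_inj_surj) (use \<rho>n injr in auto)
  then have "bij_betw \<rho> {..<n} {..<n}" using injr by (simp add: bij_betw_def)
  then have "is_sort_perm n t \<rho>" unfolding is_sort_perm_def using mono by (simp add: \<rho>_def)
  then show ?thesis by blast
qed

lemma sort_perm_is_sort_perm:
  assumes inj: "inj_on t {..<n}"
  shows "is_sort_perm n t (sort_perm n t)"
proof -
  have "\<exists>!\<rho>. is_sort_perm n t \<rho>"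
    using is_sort_perm_exists[OF inj] is_sort_perm_unique[OF _ _ inj] by blast
  then show ?thesis unfolding sort_perm_def is_sort_perm_def[symmetric] by (rule theI')
qed

lemma bij_betw_sort_perm:
  "admissible n T s \<Longrightarrow> bij_betw (sort_perm n s) {..<n} {..<n}"
  using sort_perm_is_sort_perm by (auto simp: admissible_def is_sort_perm_def)

lemma sorted_ext_gap_pos:
  assumes adm: "admissible n T s" and j: "j < n"
  shows "0 < sorted_ext n T s (Suc j) - sorted_ext n T s j"
proof -
  have rng: "\<And>i. i < n \<Longrightarrow> 0 < s i \<and> s i < T"
    using adm by (auto simp: admissible_def)
  have "is_sort_perm n s (sort_perm n s)"
    using adm by (intro sort_perm_is_sort_perm) (simp add: admissible_def)
  then have \<rho>j: "sort_perm n s j < n"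
    and m: "\<And>i k. i < k \<Longrightarrow> k < n \<Longrightarrow> s (sort_perm n s i) < s (sort_perm n s k)"
    using j by (auto simp: is_sort_perm_def dest: bij_betw_apply)
  show ?thesis
  proof (cases "Suc j < n")
    case True then show ?thesis using m[of j "Suc j"] j by (simp add: sorted_ext_def)
  next
    case False then show ?thesis using j rng[OF \<rho>j] by (simp add: sorted_ext_def)
  qed
qed

lemma beta_pos: "admissible n T s \<Longrightarrow> 0 < beta n T s"
  unfolding beta_def by (intro prod_pos) (use sorted_ext_gap_pos in force)

subsection \<open>Chains of heat kernels with a two-point kernel\<close>

definition heat_chain :: "nat \<Rightarrow> real \<Rightarrow> (nat \<Rightarrow> real) \<Rightarrow> 'a::euclidean_space \<Rightarrow> (nat \<Rightarrow> 'a) \<Rightarrow> real" where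
  "heat_chain n T t x xs = (\<Prod>j<n. heat (sorted_ext n T t (Suc j) - sorted_ext n T t j)
                      (reord_ext n t x xs (Suc j) - reord_ext n t x xs j))"

lemma heat_chain_nonneg: "0 \<le> heat_chain n T t x xs"
  unfolding heat_chain_def by (intro prod_nonneg) (simp add: heat_nonneg)

lemma borel_measurable_reord_ext[measurable]:
  "(\<lambda>\<omega>. reord_ext n t (x::'a::euclidean_space) \<omega> j) \<in> borel_measurable (PiM I (\<lambda>_. (lborel::'a measure)))"
  unfolding reord_ext_def by (cases "j < n") simp_all

lemma borel_measurable_heat_chain[measurable]:
  "heat_chain n T t (x::'a::euclidean_space) \<in> borel_measurable (PiM I (\<lambda>_. (lborel::'a measure)))"
  unfolding heat_chain_def by measurable

definition psi_kernel :: "('a::euclidean_space \<Rightarrow> 'a \<Rightarrow> ennreal) \<Rightarrow> nat \<Rightarrow> real \<Rightarrow> 'a \<Rightarrow>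
    (nat \<Rightarrow> real) \<Rightarrow> (nat \<Rightarrow> real) \<Rightarrow> ennreal" where
  "psi_kernel G n T x s t =
    (\<integral>\<^sup>+ xs. \<integral>\<^sup>+ ys. (\<Prod>j<n. G (xs j) (ys j)) * ennreal (heat_chain n T t x xs) * ennreal (heat_chain n T s x ys)
     \<partial>(PiM {..<n} (\<lambda>_. (lborel :: 'a measure)))
     \<partial>(PiM {..<n} (\<lambda>_. (lborel :: 'a measure))))"

lemma psi_le_psi_kernel:
  assumes f0: "\<And>w. 0 \<le> f w" and fG: "\<And>w z. ennreal (f (w - z)) \<le> G w z"
  shows "psi f n T x s t \<le> psi_kernel G n T x s t"
  unfolding psi_def psi_kernel_def heat_chain_def[symmetric]
proof (intro nn_integral_mono)
  fix xs ys :: "nat \<Rightarrow> 'a"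
  have "ennreal ((\<Prod>j<n. f (xs j - ys j)) * heat_chain n T t x xs * heat_chain n T s x ys)
      = (\<Prod>j<n. ennreal (f (xs j - ys j))) * ennreal (heat_chain n T t x xs) * ennreal (heat_chain n T s x ys)"
    by (simp add: ennreal_mult'' heat_chain_nonneg prod_ennreal f0)
  also have "\<dots> \<le> (\<Prod>j<n. G (xs j) (ys j)) * ennreal (heat_chain n T t x xs) * ennreal (heat_chain n T s x ys)"
    by (intro mult_right_mono prod_mono_ennreal) (auto simp: fG)
  finally show "ennreal ((\<Prod>j<n. f (xs j - ys j)) * heat_chain n T t x xs * heat_chain n T s x ys)
      \<le> (\<Prod>j<n. G (xs j) (ys j)) * ennreal (heat_chain n T t x xs) * ennreal (heat_chain n T s x ys)" .
qed

definition Jkernel :: "('a::euclidean_space \<Rightarrow> 'a \<Rightarrow> ennreal) \<Rightarrow> real \<Rightarrow> 'a \<Rightarrow> 'a \<Rightarrow> ennreal" where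
  "Jkernel G u a b = (\<integral>\<^sup>+w. \<integral>\<^sup>+w'. ennreal (heat u (w - a) * heat u (w' - b)) * G w w' \<partial>lborel \<partial>lborel)"

lemma Jkernel_eq_Jf:
  fixes f :: "'a::euclidean_space \<Rightarrow> real" and G :: "'a \<Rightarrow> 'a \<Rightarrow> ennreal"
  assumes f0: "\<And>w. 0 \<le> f w" and eq: "\<And>x y. x \<noteq> y \<Longrightarrow> G x y = ennreal (f (x - y))"
  shows "Jkernel G u a b = Jf f u u a b"
  unfolding Jkernel_def Jf_def
proof (rule nn_integral_cong)
  fix w :: 'a
  have "AE w' in lborel. ennreal (heat u (w - a) * heat u (w' - b)) * G w w'
          = ennreal (heat u (w - a) * heat u (w' - b) * f (w - w'))"
    using AE_lborel_singleton[of w]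
    by eventually_elim (simp add: eq ennreal_mult'' f0 heat_nonneg)
  then show "(\<integral>\<^sup>+w'. ennreal (heat u (w - a) * heat u (w' - b)) * G w w' \<partial>lborel)
          = (\<integral>\<^sup>+w'. ennreal (heat u (w - a) * heat u (w' - b) * f (w - w')) \<partial>lborel)"
    by (rule nn_integral_cong_AE)
qed

definition ext_point :: "nat \<Rightarrow> 'a \<Rightarrow> (nat \<Rightarrow> 'a) \<Rightarrow> nat \<Rightarrow> 'a" where
  "ext_point n x a j = (if j < n then a j else x)"

lemma borel_measurable_ext_point[measurable]:
  "(\<lambda>\<omega>. ext_point n (x::'a::euclidean_space) \<omega> j) \<in> borel_measurable (PiM I (\<lambda>_. (lborel::'a measure)))"
  unfolding ext_point_def by (cases "j < n") simp_all

definition chain_integrand :: "('a::euclidean_space \<Rightarrow> 'a \<Rightarrow> ennreal) \<Rightarrow> nat \<Rightarrow> (nat \<Rightarrow> real) \<Rightarrow> 'a \<Rightarrow>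
    nat set \<Rightarrow> (nat \<Rightarrow> 'a) \<Rightarrow> (nat \<Rightarrow> 'a) \<Rightarrow> ennreal" where
  "chain_integrand G n u x K a b = (\<Prod>j\<in>K. G (a j) (b j))
      * ennreal (\<Prod>j\<in>K. heat (u j) (ext_point n x a (Suc j) - ext_point n x a j))
      * ennreal (\<Prod>j\<in>K. heat (u j) (ext_point n x b (Suc j) - ext_point n x b j))"

definition chain_integral :: "('a::euclidean_space \<Rightarrow> 'a \<Rightarrow> ennreal) \<Rightarrow> nat \<Rightarrow> (nat \<Rightarrow> real) \<Rightarrow> 'a \<Rightarrow> nat \<Rightarrow> ennreal" where
  "chain_integral G n u x k = (\<integral>\<^sup>+a. \<integral>\<^sup>+b. chain_integrand G n u x {k..<n} a b
      \<partial>PiM {k..<n} (\<lambda>_. (lborel::'a measure)) \<partial>PiM {k..<n} (\<lambda>_. (lborel::'a measure)))"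

lemma chain_integral_last: "chain_integral G n u x n = 1"
  unfolding chain_integral_def chain_integrand_def by (simp add: PiM_empty nn_integral_count_space_finite)

lemma chain_integrand_update:
  assumes "k < n"
  shows "chain_integrand G n u x {k..<n} (a(k := \<alpha>)) (b(k := \<beta>))
    = G \<alpha> \<beta> * ennreal (heat (u k) (ext_point n x a (Suc k) - \<alpha>))
        * ennreal (heat (u k) (ext_point n x b (Suc k) - \<beta>)) * chain_integrand G n u x {Suc k..<n} a b"
proof -
  have split: "{k..<n} = insert k {Suc k..<n}" using assms by auto
  have ext: "ext_point n x (a(k := \<alpha>)) j = (if j = k then \<alpha> else ext_point n x a j)" for a :: "nat \<Rightarrow> 'a" and \<alpha> j
    using assms by (simp add: ext_point_def)
  have "(\<Prod>j\<in>{Suc k..<n}. heat (u j) (ext_point n x (a(k := \<alpha>)) (Suc j) - ext_point n x (a(k := \<alpha>)) j))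
      = (\<Prod>j\<in>{Suc k..<n}. heat (u j) (ext_point n x a (Suc j) - ext_point n x a j))" for a :: "nat \<Rightarrow> 'a" and \<alpha>
    by (rule prod.cong) (auto simp: ext)
  moreover have "(\<Prod>j\<in>{Suc k..<n}. G ((a(k := \<alpha>)) j) ((b(k := \<beta>)) j)) = (\<Prod>j\<in>{Suc k..<n}. G (a j) (b j))"
    by (rule prod.cong) auto
  ultimately show ?thesis
    unfolding chain_integrand_def split
    by (simp add: ext ennreal_mult heat_nonneg prod_nonneg ac_simps)
qed

lemma chain_integral_integrate_first:
  fixes G :: "'a::euclidean_space \<Rightarrow> 'a \<Rightarrow> ennreal"
  assumes [measurable]: "(\<lambda>(w, w'). G w w') \<in> borel_measurable (lborel \<Otimes>\<^sub>M lborel)" and kn: "k < n"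
  shows "chain_integral G n u x k = (\<integral>\<^sup>+a. \<integral>\<^sup>+b.
      Jkernel G (u k) (ext_point n x a (Suc k)) (ext_point n x b (Suc k)) * chain_integrand G n u x {Suc k..<n} a b
      \<partial>PiM {Suc k..<n} (\<lambda>_. lborel) \<partial>PiM {Suc k..<n} (\<lambda>_. lborel))"
proof -
  let ?L = "lborel :: 'a measure"
  define J where "J = {Suc k..<n}"
  have IJ: "{k..<n} = insert k J" and kJ: "k \<notin> J" and fJ: "finite J"
    using kn by (auto simp: J_def)
  define P where "P = PiM J (\<lambda>_. ?L)"
  interpret psf: product_sigma_finite "\<lambda>_. ?L" by (rule product_sigma_finite_lborel)
  interpret P: sigma_finite_measure P unfolding P_def by (rule sigma_finite_PiM_lborel[OF fJ])
  interpret LP: pair_sigma_finite ?L P ..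
  interpret PI: sigma_finite_measure "PiM {k..<n} (\<lambda>_. ?L)" by (rule sigma_finite_PiM_lborel) simp
  define e where "e a = ext_point n x a (Suc k)" for a :: "nat \<Rightarrow> 'a"
  define F where "F = chain_integrand G n u x {k..<n}"
  define R where "R = chain_integrand G n u x J"
  define Q where "Q \<alpha> \<beta> c d = G \<alpha> \<beta> * ennreal (heat (u k) (c - \<alpha>)) * ennreal (heat (u k) (d - \<beta>))" for \<alpha> \<beta> c d
  have update: "F (a(k := \<alpha>)) (b(k := \<beta>)) = Q \<alpha> \<beta> (e a) (e b) * R a b" for a b \<alpha> \<beta>
    unfolding F_def R_def Q_def e_def J_def by (rule chain_integrand_update[OF kn])
  have QJ: "(\<integral>\<^sup>+\<alpha>. \<integral>\<^sup>+\<beta>. Q \<alpha> \<beta> c d \<partial>?L \<partial>?L) = Jkernel G (u k) c d" for c d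
    unfolding Jkernel_def Q_def
    by (intro nn_integral_cong) (simp add: ennreal_mult heat_nonneg heat_minus_commute[of _ c] heat_minus_commute[of _ d] ac_simps)
  have [measurable]: "(\<lambda>(\<alpha>, \<beta>). Q \<alpha> \<beta> c d) \<in> borel_measurable (?L \<Otimes>\<^sub>M ?L)" for c d
    unfolding Q_def by measurable
  have [measurable]: "(\<lambda>(a, b). R a b) \<in> borel_measurable (P \<Otimes>\<^sub>M P)" "R a \<in> borel_measurable P" for a
    unfolding R_def chain_integrand_def P_def by measurable
  have [measurable (raw)]: "(\<lambda>p. Q (f1 p) (f2 p) c (f4 p)) \<in> borel_measurable N"
    if [measurable]: "f1 \<in> borel_measurable N" "f2 \<in> borel_measurable N" "f4 \<in> borel_measurable N"
    for N :: "(('a \<times> (nat \<Rightarrow> 'a)) \<times> 'a) measure" and f1 f2 f4 c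
    unfolding Q_def by measurable
  have [measurable]: "e \<in> borel_measurable P"
    unfolding e_def P_def by measurable
  have [measurable]: "(\<lambda>(a, b). F a b) \<in> borel_measurable (PiM {k..<n} (\<lambda>_. ?L) \<Otimes>\<^sub>M PiM {k..<n} (\<lambda>_. ?L))"
    "F a \<in> borel_measurable (PiM {k..<n} (\<lambda>_. ?L))" for a
    unfolding F_def chain_integrand_def by measurable
  have "chain_integral G n u x k = (\<integral>\<^sup>+a. \<integral>\<^sup>+\<alpha>. (\<integral>\<^sup>+b. F (a(k := \<alpha>)) b \<partial>PiM {k..<n} (\<lambda>_. ?L)) \<partial>?L \<partial>P)"
    unfolding chain_integral_def F_def[symmetric] unfolding IJ P_def
    by (rule psf.product_nn_integral_insert[OF fJ kJ]) (unfold IJ[symmetric], measurable)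
  also have "\<dots> = (\<integral>\<^sup>+a. \<integral>\<^sup>+\<alpha>. (\<integral>\<^sup>+b. \<integral>\<^sup>+\<beta>. Q \<alpha> \<beta> (e a) (e b) * R a b \<partial>?L \<partial>P) \<partial>?L \<partial>P)"
    unfolding update[symmetric] P_def IJ
    by (intro nn_integral_cong psf.product_nn_integral_insert[OF fJ kJ]) (unfold IJ[symmetric], measurable)
  also have "\<dots> = (\<integral>\<^sup>+a. \<integral>\<^sup>+b. (\<integral>\<^sup>+\<alpha>. \<integral>\<^sup>+\<beta>. Q \<alpha> \<beta> (e a) (e b) * R a b \<partial>?L \<partial>?L) \<partial>P \<partial>P)"
    by (intro nn_integral_cong LP.Fubini'[symmetric]) measurable
  also have "\<dots> = (\<integral>\<^sup>+a. \<integral>\<^sup>+b. (\<integral>\<^sup>+\<alpha>. \<integral>\<^sup>+\<beta>. Q \<alpha> \<beta> (e a) (e b) \<partial>?L \<partial>?L) * R a b \<partial>P \<partial>P)"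
    by (intro nn_integral_cong) (simp add: nn_integral_multc)
  finally show ?thesis by (simp add: QJ e_def R_def P_def J_def)
qed

lemma chain_integral_le_prod:
  fixes G :: "'a::euclidean_space \<Rightarrow> 'a \<Rightarrow> ennreal"
  assumes Gm[measurable]: "(\<lambda>(w, w'). G w w') \<in> borel_measurable (lborel \<Otimes>\<^sub>M lborel)"
    and J_le: "\<And>j a b. j < n \<Longrightarrow> Jkernel G (u j) a b \<le> ennreal (B j)"
    and B0: "\<And>j. 0 \<le> B j"
  shows "k \<le> n \<Longrightarrow> chain_integral G n u x k \<le> ennreal (\<Prod>j\<in>{k..<n}. B j)"
proof (induction "n - k" arbitrary: k)
  case 0
  then show ?case by (simp add: chain_integral_last)
next
  case (Suc m)
  then have kn: "k < n" by simp
  interpret P: sigma_finite_measure "PiM {Suc k..<n} (\<lambda>_. (lborel::'a measure))"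
    by (rule sigma_finite_PiM_lborel) simp
  have [measurable]: "chain_integrand G n u x {Suc k..<n} a \<in> borel_measurable (PiM {Suc k..<n} (\<lambda>_. lborel))"
    "(\<lambda>(a, b). chain_integrand G n u x {Suc k..<n} a b)
       \<in> borel_measurable (PiM {Suc k..<n} (\<lambda>_. lborel) \<Otimes>\<^sub>M PiM {Suc k..<n} (\<lambda>_. lborel))" for a
    unfolding chain_integrand_def by measurable
  have "chain_integral G n u x k \<le> (\<integral>\<^sup>+a. \<integral>\<^sup>+b. ennreal (B k) * chain_integrand G n u x {Suc k..<n} a b
      \<partial>PiM {Suc k..<n} (\<lambda>_. lborel) \<partial>PiM {Suc k..<n} (\<lambda>_. lborel))"
    unfolding chain_integral_integrate_first[OF Gm kn]
    by (intro nn_integral_mono mult_right_mono J_le kn) simp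
  also have "\<dots> = ennreal (B k) * chain_integral G n u x (Suc k)"
    unfolding chain_integral_def by (simp add: nn_integral_cmult)
  also have "\<dots> \<le> ennreal (B k) * ennreal (\<Prod>j\<in>{Suc k..<n}. B j)"
    using Suc kn by (intro mult_left_mono) auto
  also have "\<dots> = ennreal (\<Prod>j\<in>{k..<n}. B j)"
    using kn B0 by (simp add: prod.atLeast_Suc_lessThan ennreal_mult prod_nonneg)
  finally show ?case .
qed

text \<open>On the diagonal, relabelling the points in time order turns \<^const>\<open>psi_kernel\<close> into a chain
integral with time increments the gaps of the sorted times.\<close>

lemma psi_kernel_diagonal_eq_chain_integral:
  fixes G :: "'a::euclidean_space \<Rightarrow> 'a \<Rightarrow> ennreal"
  assumes [measurable]: "(\<lambda>(w, w'). G w w') \<in> borel_measurable (lborel \<Otimes>\<^sub>M lborel)"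
    and \<rho>: "bij_betw (sort_perm n s) {..<n} {..<n}"
  shows "psi_kernel G n T x s s = chain_integral G n (\<lambda>j. sorted_ext n T s (Suc j) - sorted_ext n T s j) x 0"
proof -
  define I where "I = {..<n}"
  define P where "P = PiM I (\<lambda>_. (lborel::'a measure))"
  interpret P: sigma_finite_measure P unfolding P_def I_def by (rule sigma_finite_PiM_lborel) simp
  define \<tau> where "\<tau> = the_inv_into I (sort_perm n s)"
  have \<tau>: "bij_betw \<tau> I I" unfolding \<tau>_def I_def by (rule bij_betw_the_inv_into[OF \<rho>])
  define r where "r \<omega> = (\<lambda>i\<in>I. \<omega> (\<tau> i))" for \<omega> :: "nat \<Rightarrow> 'a"
  have reord: "reord_ext n s x (r \<omega>) = ext_point n x \<omega>" for \<omega>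
  proof
    fix j
    show "reord_ext n s x (r \<omega>) j = ext_point n x \<omega> j"
      using \<rho> unfolding reord_ext_def ext_point_def r_def \<tau>_def I_def
      by (auto simp: bij_betw_def the_inv_into_f_f)
  qed
  have prod_G: "(\<Prod>j<n. G (r \<omega> j) (r \<omega>' j)) = (\<Prod>j<n. G (\<omega> j) (\<omega>' j))" for \<omega> \<omega>'
  proof -
    have "(\<Prod>j<n. G (r \<omega> j) (r \<omega>' j)) = (\<Prod>j\<in>I. G (\<omega> (\<tau> j)) (\<omega>' (\<tau> j)))"
      unfolding I_def r_def by (intro prod.cong) auto
    also have "\<dots> = (\<Prod>j\<in>I. G (\<omega> j) (\<omega>' j))"
      using prod.reindex_bij_betw[OF \<tau>, of "\<lambda>j. G (\<omega> j) (\<omega>' j)"] by simp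
    finally show ?thesis by (simp add: I_def)
  qed
  define \<Phi> where "\<Phi> xs ys = (\<Prod>j<n. G (xs j) (ys j)) * ennreal (heat_chain n T s x xs) * ennreal (heat_chain n T s x ys)" for xs ys
  have \<Phi>_meas[measurable]: "(\<lambda>(xs, ys). \<Phi> xs ys) \<in> borel_measurable (P \<Otimes>\<^sub>M P)" "\<Phi> xs \<in> borel_measurable P" for xs
    unfolding \<Phi>_def P_def I_def by measurable
  have mO: "(\<lambda>xs. \<integral>\<^sup>+ys. \<Phi> xs ys \<partial>P) \<in> borel_measurable P" by measurable
  have "psi_kernel G n T x s s = (\<integral>\<^sup>+xs. \<integral>\<^sup>+ys. \<Phi> xs ys \<partial>P \<partial>P)"
    unfolding psi_kernel_def \<Phi>_def P_def I_def ..
  also have "\<dots> = (\<integral>\<^sup>+\<omega>. \<integral>\<^sup>+ys. \<Phi> (r \<omega>) ys \<partial>P \<partial>P)"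
    unfolding P_def r_def
    by (rule nn_integral_PiM_permute[OF sigma_finite_lborel _ \<tau>])
       (use mO in \<open>simp_all add: I_def P_def\<close>)
  also have "\<dots> = (\<integral>\<^sup>+\<omega>. \<integral>\<^sup>+\<omega>'. \<Phi> (r \<omega>) (r \<omega>') \<partial>P \<partial>P)"
    unfolding P_def r_def
    by (rule nn_integral_cong, rule nn_integral_PiM_permute[OF sigma_finite_lborel _ \<tau>])
       (use \<Phi>_meas(2) in \<open>simp_all add: I_def P_def\<close>)
  also have "\<dots> = chain_integral G n (\<lambda>j. sorted_ext n T s (Suc j) - sorted_ext n T s j) x 0"
    unfolding chain_integral_def chain_integrand_def \<Phi>_def heat_chain_def reord prod_G P_def I_def
    by (simp add: atLeast0LessThan)
  finally show ?thesis .
qed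

subsection \<open>Two-point kernels that are superpositions of products\<close>

definition chain_transform :: "('b \<Rightarrow> 'a::euclidean_space \<Rightarrow> ennreal) \<Rightarrow> nat \<Rightarrow> real \<Rightarrow> 'a \<Rightarrow> (nat \<Rightarrow> real) \<Rightarrow> (nat \<Rightarrow> 'b) \<Rightarrow> ennreal" where
  "chain_transform K n T x t \<Theta> = (\<integral>\<^sup>+xs. (\<Prod>j<n. K (\<Theta> j) (xs j)) * ennreal (heat_chain n T t x xs) \<partial>(PiM {..<n} (\<lambda>_. (lborel :: 'a measure))))"

locale kernel_mixture =
  fixes M :: "'b measure" and K :: "'b \<Rightarrow> 'a::euclidean_space \<Rightarrow> ennreal" and G :: "'a \<Rightarrow> 'a \<Rightarrow> ennreal"
  assumes sigma_finite: "sigma_finite_measure M" and space_UNIV: "space M = UNIV"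
    and K_measurable[measurable]: "(\<lambda>(\<theta>, x). K \<theta> x) \<in> borel_measurable (M \<Otimes>\<^sub>M lborel)"
    and G_eq: "\<And>x y. G x y = (\<integral>\<^sup>+\<theta>. K \<theta> x * K \<theta> y \<partial>M)"
begin

lemma measurable_component[measurable]: "(\<lambda>\<omega>. \<omega> k) \<in> measurable (PiM I (\<lambda>_. M)) M"
  by (rule measurable_component_PiM_any[OF space_UNIV])

lemma product_sigma_finite: "product_sigma_finite (\<lambda>_. M)"
  using sigma_finite by (simp add: product_sigma_finite_def)

lemma sigma_finite_PiM: "sigma_finite_measure (PiM {..<n::nat} (\<lambda>_. M))"
  using product_sigma_finite.sigma_finite[OF product_sigma_finite, of "{..<n}"] by simp

lemma prod_G_eq_nn_integral:
  "(\<Prod>j<(n::nat). G (xs j) (ys j)) = (\<integral>\<^sup>+\<Theta>. (\<Prod>j<n. K (\<Theta> j) (xs j)) * (\<Prod>j<n. K (\<Theta> j) (ys j)) \<partial>PiM {..<n} (\<lambda>_. M))"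
proof -
  have "(\<integral>\<^sup>+\<Theta>. (\<Prod>j<n. K (\<Theta> j) (xs j)) * (\<Prod>j<n. K (\<Theta> j) (ys j)) \<partial>PiM {..<n} (\<lambda>_. M))
      = (\<integral>\<^sup>+\<Theta>. (\<Prod>j<n. K (\<Theta> j) (xs j) * K (\<Theta> j) (ys j)) \<partial>PiM {..<n} (\<lambda>_. M))"
    by (simp add: prod.distrib)
  also have "\<dots> = (\<Prod>j<n. \<integral>\<^sup>+\<theta>. K \<theta> (xs j) * K \<theta> (ys j) \<partial>M)"
    by (rule product_sigma_finite.product_nn_integral_prod[OF product_sigma_finite, of "{..<n}"
          "\<lambda>j \<theta>. K \<theta> (xs j) * K \<theta> (ys j)", simplified]) measurable
  finally show ?thesis by (simp add: G_eq)
qed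

lemma borel_measurable_chain_transform[measurable]:
  "chain_transform K n T x s \<in> borel_measurable (PiM {..<n} (\<lambda>_. M))"
proof -
  interpret P: sigma_finite_measure "PiM {..<n} (\<lambda>_. (lborel :: 'a measure))"
    by (rule sigma_finite_PiM_lborel) simp
  show ?thesis unfolding chain_transform_def[abs_def] by measurable
qed

text \<open>Expanding \<open>G\<close> and integrating in the points first separates the two chains.\<close>

lemma psi_kernel_eq_nn_integral:
  "psi_kernel G n T x s t = (\<integral>\<^sup>+\<Theta>. chain_transform K n T x t \<Theta> * chain_transform K n T x s \<Theta> \<partial>PiM {..<n} (\<lambda>_. M))"
proof -
  define P where "P = PiM {..<n} (\<lambda>_. (lborel :: 'a measure))"
  define PM where "PM = PiM {..<n} (\<lambda>_. M)"
  interpret PM: sigma_finite_measure PM unfolding PM_def by (rule sigma_finite_PiM)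
  interpret P: sigma_finite_measure P unfolding P_def by (rule sigma_finite_PiM_lborel) simp
  interpret PPM: pair_sigma_finite P PM ..
  define A where "A \<Theta> xs t = (\<Prod>j<n. K (\<Theta> j) (xs j)) * ennreal (heat_chain n T t x xs)" for \<Theta> xs t
  have [measurable]: "(\<lambda>(\<Theta>, xs). A \<Theta> xs t) \<in> borel_measurable (PM \<Otimes>\<^sub>M P)"
    "(\<lambda>(xs, \<Theta>). A \<Theta> xs t) \<in> borel_measurable (P \<Otimes>\<^sub>M PM)" "(\<lambda>\<Theta>. A \<Theta> xs t) \<in> borel_measurable PM" for xs t
    unfolding A_def PM_def P_def by measurable
  have [measurable]: "chain_transform K n T x t \<in> borel_measurable PM" for t
    unfolding PM_def by measurable
  have "psi_kernel G n T x s t = (\<integral>\<^sup>+xs. \<integral>\<^sup>+ys. (\<integral>\<^sup>+\<Theta>. A \<Theta> xs t * A \<Theta> ys s \<partial>PM) \<partial>P \<partial>P)"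
    unfolding psi_kernel_def P_def[symmetric]
  proof (intro nn_integral_cong)
    fix xs ys
    have "(\<Prod>j<n. G (xs j) (ys j)) * ennreal (heat_chain n T t x xs) * ennreal (heat_chain n T s x ys)
       = (\<integral>\<^sup>+\<Theta>. (\<Prod>j<n. K (\<Theta> j) (xs j)) * (\<Prod>j<n. K (\<Theta> j) (ys j)) \<partial>PM)
           * (ennreal (heat_chain n T t x xs) * ennreal (heat_chain n T s x ys))"
      unfolding prod_G_eq_nn_integral PM_def by (simp add: mult.assoc)
    also have "\<dots> = (\<integral>\<^sup>+\<Theta>. A \<Theta> xs t * A \<Theta> ys s \<partial>PM)"
      unfolding A_def by (subst nn_integral_multc[symmetric]) (unfold PM_def, measurable, simp add: ac_simps)
    finally show "(\<Prod>j<n. G (xs j) (ys j)) * ennreal (heat_chain n T t x xs) * ennreal (heat_chain n T s x ys)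
       = (\<integral>\<^sup>+\<Theta>. A \<Theta> xs t * A \<Theta> ys s \<partial>PM)" .
  qed
  also have "\<dots> = (\<integral>\<^sup>+xs. \<integral>\<^sup>+\<Theta>. (\<integral>\<^sup>+ys. A \<Theta> xs t * A \<Theta> ys s \<partial>P) \<partial>PM \<partial>P)"
    by (intro nn_integral_cong PPM.Fubini'[symmetric]) measurable
  also have "\<dots> = (\<integral>\<^sup>+xs. \<integral>\<^sup>+\<Theta>. A \<Theta> xs t * chain_transform K n T x s \<Theta> \<partial>PM \<partial>P)"
    unfolding chain_transform_def A_def[symmetric] P_def[symmetric]
    by (intro nn_integral_cong nn_integral_cmult) measurable
  also have "\<dots> = (\<integral>\<^sup>+\<Theta>. \<integral>\<^sup>+xs. A \<Theta> xs t * chain_transform K n T x s \<Theta> \<partial>P \<partial>PM)"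
    by (rule PPM.Fubini'[symmetric]) measurable
  also have "\<dots> = (\<integral>\<^sup>+\<Theta>. chain_transform K n T x t \<Theta> * chain_transform K n T x s \<Theta> \<partial>PM)"
    unfolding chain_transform_def A_def[symmetric] P_def[symmetric]
    by (intro nn_integral_cong nn_integral_multc) measurable
  finally show ?thesis unfolding PM_def .
qed

lemma psi_kernel_Cauchy_Schwarz:
  "(psi_kernel G n T x s t)\<^sup>2 \<le> psi_kernel G n T x s s * psi_kernel G n T x t t"
proof -
  have "(psi_kernel G n T x s t)\<^sup>2 \<le> (\<integral>\<^sup>+\<Theta>. (chain_transform K n T x t \<Theta>)\<^sup>2 \<partial>PiM {..<n} (\<lambda>_. M))
      * (\<integral>\<^sup>+\<Theta>. (chain_transform K n T x s \<Theta>)\<^sup>2 \<partial>PiM {..<n} (\<lambda>_. M))"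
    unfolding psi_kernel_eq_nn_integral by (rule Cauchy_Schwarz_nn_integral) measurable
  then show ?thesis
    unfolding psi_kernel_eq_nn_integral by (simp add: power2_eq_square mult.commute)
qed

end

lemma kernel_mixture_const:
  assumes c: "0 \<le> c"
  shows "kernel_mixture (count_space (UNIV::unit set)) (\<lambda>_ _. ennreal (sqrt c)) (\<lambda>(_::'a::euclidean_space) _. ennreal c)"
proof (rule kernel_mixture.intro)
  show "sigma_finite_measure (count_space (UNIV::unit set))"
    by (rule sigma_finite_measure_count_space_countable) simp
  fix x y :: 'a
  show "ennreal c = (\<integral>\<^sup>+\<theta>. ennreal (sqrt c) * ennreal (sqrt c) \<partial>count_space (UNIV::unit set))"
    using c by (simp add: nn_integral_count_space_finite ennreal_mult[symmetric])
qed simp_all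

subsection \<open>The bound on \<^const>\<open>psi\<close> through a two-point kernel\<close>

lemma ennreal_le_of_power2_le: "(a::ennreal)\<^sup>2 \<le> b\<^sup>2 \<Longrightarrow> a \<le> b"
proof (rule ccontr)
  assume h: "a\<^sup>2 \<le> b\<^sup>2" and "\<not> a \<le> b"
  then have ba: "b < a" by simp
  then obtain rb where rb: "b = ennreal rb" "0 \<le> rb" by (cases b rule: ennreal_cases) auto
  have "b\<^sup>2 < a\<^sup>2"
  proof (cases a rule: ennreal_cases)
    case (real ra)
    with rb ba have "rb\<^sup>2 < ra\<^sup>2" by (simp add: ennreal_less_iff power_strict_mono)
    then show ?thesis using rb real by (simp add: ennreal_power ennreal_less_iff)
  next
    case top
    then show ?thesis using rb by (simp add: ennreal_power top_unique)
  qed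
  with h show False by simp
qed

lemma psi_square_le:
  fixes f :: "'a::euclidean_space \<Rightarrow> real" and G :: "'a \<Rightarrow> 'a \<Rightarrow> ennreal"
  assumes mix: "kernel_mixture M K G"
    and Gm: "(\<lambda>(w, w'). G w w') \<in> borel_measurable (lborel \<Otimes>\<^sub>M lborel)"
    and f0: "\<And>w. 0 \<le> f w" and fG: "\<And>w z. ennreal (f (w - z)) \<le> G w z"
    and J_le: "\<And>v a b. 0 < v \<Longrightarrow> Jkernel G v a b \<le> ennreal (B v)"
    and B0: "\<And>v. 0 \<le> B v"
    and adms: "admissible n T s" and admt: "admissible n T t"
  shows "(psi f n T x s t)\<^sup>2 \<le> ennreal (\<Prod>j<n. B (sorted_ext n T s (Suc j) - sorted_ext n T s j))
                                * ennreal (\<Prod>j<n. B (sorted_ext n T t (Suc j) - sorted_ext n T t j))"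
proof -
  have diagonal: "psi_kernel G n T x r r \<le> ennreal (\<Prod>j<n. B (sorted_ext n T r (Suc j) - sorted_ext n T r j))"
    if adm: "admissible n T r" for r
  proof -
    have "psi_kernel G n T x r r = chain_integral G n (\<lambda>j. sorted_ext n T r (Suc j) - sorted_ext n T r j) x 0"
      by (rule psi_kernel_diagonal_eq_chain_integral[OF Gm bij_betw_sort_perm[OF adm]])
    also have "\<dots> \<le> ennreal (\<Prod>j\<in>{0..<n}. B (sorted_ext n T r (Suc j) - sorted_ext n T r j))"
      by (rule chain_integral_le_prod[OF Gm _ B0]) (auto intro!: J_le sorted_ext_gap_pos[OF adm])
    finally show ?thesis by (simp add: atLeast0LessThan)
  qed
  have "(psi f n T x s t)\<^sup>2 \<le> (psi_kernel G n T x s t)\<^sup>2"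
    by (intro power_mono psi_le_psi_kernel f0 fG) simp
  also have "\<dots> \<le> psi_kernel G n T x s s * psi_kernel G n T x t t"
    by (rule kernel_mixture.psi_kernel_Cauchy_Schwarz[OF mix])
  also have "\<dots> \<le> ennreal (\<Prod>j<n. B (sorted_ext n T s (Suc j) - sorted_ext n T s j))
                * ennreal (\<Prod>j<n. B (sorted_ext n T t (Suc j) - sorted_ext n T t j))"
    by (intro mult_mono diagonal adms admt) simp_all
  finally show ?thesis .
qed

lemma prod_gap_powr_eq:
  assumes adm: "admissible n T s"
  shows "(\<Prod>j<n. D * (2 * (sorted_ext n T s (Suc j) - sorted_ext n T s j)) powr e)
       = (D * 2 powr e) ^ n * beta n T s powr e"
proof -
  define u where "u j = sorted_ext n T s (Suc j) - sorted_ext n T s j" for j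
  have u: "0 < u j" if "j < n" for j
    unfolding u_def using sorted_ext_gap_pos[OF adm that] .
  have "(\<Prod>j<n. D * (2 * u j) powr e) = (\<Prod>j<n. (D * 2 powr e) * u j powr e)"
    using u by (intro prod.cong) (simp_all add: powr_mult)
  also have "\<dots> = (D * 2 powr e) ^ n * (\<Prod>j<n. u j) powr e"
    using u by (simp add: prod.distrib prod_powr_distrib)
  finally show ?thesis unfolding u_def beta_def .
qed

lemma psi_le_beta_powr:
  fixes f :: "'a::euclidean_space \<Rightarrow> real" and G :: "'a \<Rightarrow> 'a \<Rightarrow> ennreal"
  assumes mix: "kernel_mixture M K G"
    and Gm: "(\<lambda>(w, w'). G w w') \<in> borel_measurable (lborel \<Otimes>\<^sub>M lborel)"
    and f0: "\<And>w. 0 \<le> f w" and fG: "\<And>w z. ennreal (f (w - z)) \<le> G w z"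
    and G_eq: "\<And>w z. w \<noteq> z \<Longrightarrow> G w z = ennreal (f (w - z))"
    and D: "0 \<le> D"
    and J_le: "\<And>u y z. 0 < u \<Longrightarrow> Jf f u u y z \<le> ennreal (D * (2 * u) powr e)"
    and adms: "admissible n T s" and admt: "admissible n T t"
  shows "psi f n T x s t \<le> ennreal ((D * 2 powr e) ^ n * (beta n T s * beta n T t) powr (e / 2))"
proof -
  define E where "E = D * 2 powr e"
  have E0: "0 \<le> E" using D by (simp add: E_def)
  have bs: "0 < beta n T s" and bt: "0 < beta n T t" using beta_pos adms admt by auto
  have "Jkernel G v a b \<le> ennreal (D * (2 * v) powr e)" if "0 < v" for v a b
    using Jkernel_eq_Jf[where f=f and G=G, OF f0 G_eq] J_le[OF that] by simp
  then have "(psi f n T x s t)\<^sup>2 \<le> ennreal (E ^ n * beta n T s powr e) * ennreal (E ^ n * beta n T t powr e)"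
    using psi_square_le[OF mix Gm f0 fG, of "\<lambda>v. D * (2 * v) powr e", OF _ _ adms admt, of x] D
    unfolding prod_gap_powr_eq[OF adms] prod_gap_powr_eq[OF admt] E_def by simp
  also have "\<dots> = (ennreal (E ^ n * (beta n T s * beta n T t) powr (e / 2)))\<^sup>2"
  proof -
    have "((beta n T s * beta n T t) powr (e / 2))\<^sup>2 = (beta n T s * beta n T t) powr e"
      by (simp add: power2_eq_square powr_add[symmetric])
    also have "\<dots> = beta n T s powr e * beta n T t powr e"
      using bs bt by (simp add: powr_mult)
    finally have "((beta n T s * beta n T t) powr (e / 2))\<^sup>2 = beta n T s powr e * beta n T t powr e" .
    then show ?thesis
      using E0 by (simp add: ennreal_power ennreal_mult[symmetric] power_mult_distrib power2_eq_square ac_simps)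
  qed
  finally show ?thesis unfolding E_def by (rule ennreal_le_of_power2_le)
qed

lemma Jkernel_const:
  fixes a b :: "'a::euclidean_space"
  assumes v: "0 < v"
  shows "Jkernel (\<lambda>_ _. ennreal c) v a b = ennreal c"
proof -
  have "Jkernel (\<lambda>_ _. ennreal c) v a b
      = (\<integral>\<^sup>+w. ennreal (heat v (w - a)) * (\<integral>\<^sup>+w'. ennreal (heat v (w' - b)) * ennreal c \<partial>lborel) \<partial>lborel)"
    unfolding Jkernel_def
    by (intro nn_integral_cong) (subst nn_integral_cmult[symmetric], simp, simp add: ennreal_mult heat_nonneg mult.assoc)
  also have "\<dots> = ennreal c"
    by (simp add: nn_integral_multc nn_integral_heat[OF v])
  finally show ?thesis .
qed

lemma psi_le_power_of_bounded:
  fixes f :: "'a::euclidean_space \<Rightarrow> real"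
  assumes f0: "\<And>w. 0 \<le> f w" and f_le: "\<And>w. f w \<le> c"
    and adms: "admissible n T s" and admt: "admissible n T t"
  shows "psi f n T x s t \<le> ennreal (c ^ n)"
proof -
  have c: "0 \<le> c" using f0[of 0] f_le[of 0] by simp
  have "(psi f n T x s t)\<^sup>2 \<le> ennreal (\<Prod>j<n. c) * ennreal (\<Prod>j<n. c)"
    by (rule psi_square_le[OF kernel_mixture_const[OF c], where B="\<lambda>_. c"])
       (simp_all add: f0 f_le Jkernel_const c adms admt)
  also have "\<dots> = (ennreal (c ^ n))\<^sup>2"
    using c by (simp add: power2_eq_square)
  finally show ?thesis by (rule ennreal_le_of_power2_le)
qed

subsection \<open>Superpositions of Gaussians\<close>

text \<open>By the midpoint identity, \<open>gauss_mixture W q x y\<close> is the \<open>L\<^sup>2\<close> inner product of the Gaussians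
\<open>gauss_factor W q (r, z) x\<close> and \<open>gauss_factor W q (r, z) y\<close> in \<open>(r, z)\<close>.\<close>

definition gauss_factor :: "(real \<Rightarrow> real) \<Rightarrow> (real \<Rightarrow> real) \<Rightarrow> real \<times> 'a::euclidean_space \<Rightarrow> 'a \<Rightarrow> ennreal" where
  "gauss_factor W q \<theta> x = ennreal (sqrt (W (fst \<theta>)) * exp (- (2 * q (fst \<theta>)) * (norm (x - snd \<theta>))\<^sup>2))"

definition gauss_mixture :: "(real \<Rightarrow> real) \<Rightarrow> (real \<Rightarrow> real) \<Rightarrow> 'a::euclidean_space \<Rightarrow> 'a \<Rightarrow> ennreal" where
  "gauss_mixture W q x y = (\<integral>\<^sup>+r. ennreal (W r * (pi / (4 * q r)) powr (real DIM('a) / 2) * exp (- q r * (norm (x - y))\<^sup>2)) \<partial>lborel)"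

lemma borel_measurable_gauss_mixture:
  assumes [measurable]: "W \<in> borel_measurable borel" "q \<in> borel_measurable borel"
  shows "(\<lambda>(x, y). gauss_mixture W q x y) \<in> borel_measurable (lborel \<Otimes>\<^sub>M (lborel :: 'a::euclidean_space measure))"
  unfolding gauss_mixture_def by measurable

lemma nn_integral_gauss_factor_product:
  fixes x y :: "'a::euclidean_space"
  assumes W0: "0 \<le> W r" and q0: "W r \<noteq> 0 \<Longrightarrow> 0 < q r"
  shows "(\<integral>\<^sup>+z. gauss_factor W q (r, z) x * gauss_factor W q (r, z) y \<partial>lborel)
       = ennreal (W r * (pi / (4 * q r)) powr (real DIM('a) / 2) * exp (- q r * (norm (x - y))\<^sup>2))"
proof (cases "W r = 0")
  case True then show ?thesis by (simp add: gauss_factor_def)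
next
  case False
  then have q: "0 < q r" by (rule q0)
  have "(\<integral>\<^sup>+z. gauss_factor W q (r, z) x * gauss_factor W q (r, z) y \<partial>lborel)
      = (\<integral>\<^sup>+z. ennreal (W r) * ennreal (exp (- (2 * q r) * (norm (x - z))\<^sup>2) * exp (- (2 * q r) * (norm (y - z))\<^sup>2)) \<partial>lborel)"
    unfolding gauss_factor_def using W0
    by (intro nn_integral_cong) (simp add: ennreal_mult[symmetric] norm_minus_commute ac_simps)
  also have "\<dots> = ennreal (W r) * ennreal ((pi / (2 * (2 * q r))) powr (real DIM('a) / 2) * exp (- ((2 * q r) / 2) * (norm (x - y))\<^sup>2))"
    by (subst nn_integral_cmult, simp, subst nn_integral_exp_neg_norm_square_product, use q in simp_all)
  finally show ?thesis using W0 by (simp add: ennreal_mult[symmetric] ac_simps)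
qed

lemma kernel_mixture_gauss:
  fixes W q :: "real \<Rightarrow> real"
  assumes W0: "\<And>r. 0 \<le> W r" and q0: "\<And>r. W r \<noteq> 0 \<Longrightarrow> 0 < q r"
    and [measurable]: "W \<in> borel_measurable borel" "q \<in> borel_measurable borel"
  shows "kernel_mixture (lborel :: (real \<times> 'a::euclidean_space) measure) (gauss_factor W q) (gauss_mixture W q :: 'a \<Rightarrow> 'a \<Rightarrow> ennreal)"
proof (rule kernel_mixture.intro)
  show "sigma_finite_measure (lborel :: (real \<times> 'a) measure)" by (rule sigma_finite_lborel)
  show "(\<lambda>(\<theta>, x). gauss_factor W q \<theta> x) \<in> borel_measurable (lborel \<Otimes>\<^sub>M (lborel :: 'a measure))"
    unfolding gauss_factor_def lborel_prod[symmetric] by measurable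
  fix x y :: 'a
  have "(\<integral>\<^sup>+\<theta>. gauss_factor W q \<theta> x * gauss_factor W q \<theta> y \<partial>(lborel :: (real \<times> 'a) measure))
      = (\<integral>\<^sup>+r. \<integral>\<^sup>+z. gauss_factor W q (r, z) x * gauss_factor W q (r, z) y \<partial>lborel \<partial>lborel)"
    unfolding lborel_prod[symmetric]
    by (rule sigma_finite_measure.nn_integral_fst[OF sigma_finite_lborel, symmetric])
       (unfold gauss_factor_def, measurable)
  then show "gauss_mixture W q x y = (\<integral>\<^sup>+\<theta>. gauss_factor W q \<theta> x * gauss_factor W q \<theta> y \<partial>lborel)"
    unfolding gauss_mixture_def by (simp add: nn_integral_gauss_factor_product W0 q0)
qed simp

lemma psi_le_beta_powr_of_gauss_mixture:
  fixes f :: "'a::euclidean_space \<Rightarrow> real"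
  assumes W0: "\<And>r. 0 \<le> W r" and q0: "\<And>r. W r \<noteq> 0 \<Longrightarrow> 0 < q r"
    and "W \<in> borel_measurable borel" "q \<in> borel_measurable borel"
    and f0: "\<And>w. 0 \<le> f w" and f_le: "\<And>w z. ennreal (f (w - z)) \<le> gauss_mixture W q w z"
    and f_eq: "\<And>w z. w \<noteq> z \<Longrightarrow> ennreal (f (w - z)) = gauss_mixture W q w z"
    and "0 \<le> D" and J_le: "\<And>u y z. 0 < u \<Longrightarrow> Jf f u u y z \<le> ennreal (D * (2 * u) powr e)"
    and "admissible n T s" "admissible n T t"
  shows "psi f n T x s t \<le> ennreal ((D * 2 powr e) ^ n * (beta n T s * beta n T t) powr (e / 2))"
  by (rule psi_le_beta_powr[OF kernel_mixture_gauss borel_measurable_gauss_mixture])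
     (use assms in \<open>simp_all add: f_eq\<close>)

subsection \<open>The Riesz kernel\<close>

text \<open>From \<open>\<integral>\<^sub>0\<^sup>\<infinity> r\<^bsup>(d-\<alpha>)/2-1\<^esup> exp (- r |x|\<^sup>2) dr = \<Gamma>((d-\<alpha>)/2) |x|\<^bsup>\<alpha>-d\<^esup>\<close>.\<close>

definition riesz_weight :: "real \<Rightarrow> real \<Rightarrow> real \<Rightarrow> real" where
  "riesz_weight d \<alpha> r = 2 powr (- \<alpha>) * pi powr (- d / 2) / Gamma (\<alpha> / 2)
     * (indicator {0<..} r * r powr ((d - \<alpha>) / 2 - 1) * (4 * r / pi) powr (d / 2))"

lemma riesz_weight_nonneg: "0 < \<alpha> \<Longrightarrow> 0 \<le> riesz_weight d \<alpha> r"
  unfolding riesz_weight_def using Gamma_real_pos[of "\<alpha>/2"] by (auto simp: indicator_def)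

lemma borel_measurable_riesz_weight[measurable]: "riesz_weight d \<alpha> \<in> borel_measurable borel"
  unfolding riesz_weight_def by measurable

lemma riesz_weight_nonzero_imp_pos: "riesz_weight d \<alpha> r \<noteq> 0 \<Longrightarrow> 0 < r"
  unfolding riesz_weight_def by (auto simp: indicator_def split: if_splits)

lemma riesz_nonneg: "0 < \<alpha> \<Longrightarrow> \<alpha> < real DIM('a) \<Longrightarrow> 0 \<le> riesz \<alpha> (w::'a::euclidean_space)"
  unfolding riesz_def Let_def using Gamma_real_pos[of "\<alpha>/2"] Gamma_real_pos[of "(real DIM('a) - \<alpha>)/2"]
  by simp

lemma riesz_eq_gauss_mixture:
  fixes x y :: "'a::euclidean_space"
  assumes a: "0 < \<alpha>" "\<alpha> < real DIM('a)" and xy: "x \<noteq> y"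
  shows "ennreal (riesz \<alpha> (x - y)) = gauss_mixture (riesz_weight (real DIM('a)) \<alpha>) (\<lambda>r. r) x y"
proof -
  define d where "d = real DIM('a)"
  define s where "s = (d - \<alpha>) / 2"
  define l where "l = (norm (x - y))\<^sup>2"
  define c0 where "c0 = 2 powr (- \<alpha>) * pi powr (- d / 2) / Gamma (\<alpha> / 2)"
  have s: "s > 0" using a by (simp add: s_def d_def)
  have l: "l > 0" using xy by (simp add: l_def)
  have c0: "c0 > 0" using Gamma_real_pos[of "\<alpha>/2"] a by (simp add: c0_def)
  have "gauss_mixture (riesz_weight d \<alpha>) (\<lambda>r. r) x y
      = (\<integral>\<^sup>+r. ennreal c0 * ennreal (indicator {0<..} r * r powr (s - 1) * exp (- (l * r))) \<partial>lborel)"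
    unfolding gauss_mixture_def d_def[symmetric]
  proof (intro nn_integral_cong)
    fix r :: real
    show "ennreal (riesz_weight d \<alpha> r * (pi / (4 * r)) powr (d / 2) * exp (- r * (norm (x - y))\<^sup>2))
        = ennreal c0 * ennreal (indicator {0<..} r * r powr (s - 1) * exp (- (l * r)))"
    proof (cases "r > 0")
      case True
      have cancel: "(4 * r / pi) powr (d / 2) * (pi / (4 * r)) powr (d / 2) = 1"
        using True by (simp add: powr_mult[symmetric])
      have W: "riesz_weight d \<alpha> r = c0 * (r powr (s - 1) * (4 * r / pi) powr (d / 2))"
        using True by (simp add: riesz_weight_def c0_def s_def)
      have "riesz_weight d \<alpha> r * (pi / (4 * r)) powr (d / 2) * exp (- r * (norm (x - y))\<^sup>2)
          = c0 * (r powr (s - 1) * exp (- (l * r))) * ((4 * r / pi) powr (d / 2) * (pi / (4 * r)) powr (d / 2))"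
        unfolding W l_def by (simp only: mult_ac mult_minus_left)
      also have "\<dots> = c0 * (indicator {0<..} r * r powr (s - 1) * exp (- (l * r)))"
        using True by (simp only: cancel) simp
      finally show ?thesis using c0 by (simp add: ennreal_mult)
    qed (simp add: riesz_weight_def)
  qed
  also have "\<dots> = ennreal c0 * ennreal (Gamma s * l powr (- s))"
    by (subst nn_integral_cmult) (simp_all add: nn_integral_Gamma_scaled[OF s l])
  also have "\<dots> = ennreal (riesz \<alpha> (x - y))"
  proof -
    have "l = norm (x - y) powr 2" unfolding l_def using xy by (simp add: powr_realpow)
    then have "l powr (- s) = norm (x - y) powr (2 * (- s))" by (simp only: powr_powr)
    also have "2 * (- s) = - d + \<alpha>" by (simp add: s_def field_simps)
    finally have "riesz \<alpha> (x - y) = c0 * (Gamma s * l powr (- s))"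
      by (simp add: riesz_def Let_def d_def[symmetric] c0_def s_def)
    then show ?thesis using c0 Gamma_real_pos[OF s] by (simp add: ennreal_mult[symmetric])
  qed
  finally show ?thesis by (simp add: d_def)
qed

lemma riesz_le_gauss_mixture:
  fixes x y :: "'a::euclidean_space"
  assumes "0 < \<alpha>" "\<alpha> < real DIM('a)"
  shows "ennreal (riesz \<alpha> (x - y)) \<le> gauss_mixture (riesz_weight (real DIM('a)) \<alpha>) (\<lambda>r. r) x y"
proof (cases "x = y")
  case True then show ?thesis by (simp add: riesz_def Let_def)
next
  case False then show ?thesis using riesz_eq_gauss_mixture[OF assms False] by simp
qed

subsection \<open>The Bessel kernel\<close>

text \<open>Substituting \<open>q = 1 / (4 w)\<close> in the defining integral of the Bessel kernel.\<close>

definition bessel_weight :: "real \<Rightarrow> real \<Rightarrow> real \<Rightarrow> real" where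
  "bessel_weight d \<alpha> r = (4 * pi) powr (\<alpha> / 2) * Gamma (\<alpha> / 2)
     * (indicator {0<..} r * r powr ((\<alpha> - d) / 2 - 1) * exp (- r) * (1 / (pi * r)) powr (d / 2))"

definition bessel_rate :: "real \<Rightarrow> real" where "bessel_rate r = 1 / (4 * r)"

definition bessel_integrand :: "real \<Rightarrow> real \<Rightarrow> real \<Rightarrow> real \<Rightarrow> real" where
  "bessel_integrand d \<alpha> c r = indicator {0<..} r * (r powr ((\<alpha> - d) / 2 - 1) * exp (- r) * exp (- c / (4 * r)))"

lemma bessel_weight_nonneg: "0 < \<alpha> \<Longrightarrow> 0 \<le> bessel_weight d \<alpha> r"
  unfolding bessel_weight_def using Gamma_real_pos[of "\<alpha>/2"] by (auto simp: indicator_def)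

lemma borel_measurable_bessel_weight[measurable]: "bessel_weight d \<alpha> \<in> borel_measurable borel"
  unfolding bessel_weight_def by measurable

lemma borel_measurable_bessel_rate[measurable]: "bessel_rate \<in> borel_measurable borel"
  unfolding bessel_rate_def by measurable

lemma bessel_weight_nonzero_imp_rate_pos: "bessel_weight d \<alpha> r \<noteq> 0 \<Longrightarrow> 0 < bessel_rate r"
  unfolding bessel_weight_def bessel_rate_def by (auto simp: indicator_def split: if_splits)

lemma bessel_integrand_nonneg: "0 \<le> bessel_integrand d \<alpha> c r"
  unfolding bessel_integrand_def by (simp add: indicator_def)

lemma borel_measurable_bessel_integrand[measurable]: "bessel_integrand d \<alpha> c \<in> borel_measurable borel"
  unfolding bessel_integrand_def by measurable

lemma gauss_mixture_bessel_weight: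
  fixes x y :: "'a::euclidean_space"
  assumes a: "0 < \<alpha>"
  shows "gauss_mixture (bessel_weight (real DIM('a)) \<alpha>) bessel_rate x y
       = ennreal ((4 * pi) powr (\<alpha> / 2) * Gamma (\<alpha> / 2))
         * (\<integral>\<^sup>+r. ennreal (bessel_integrand (real DIM('a)) \<alpha> ((norm (x - y))\<^sup>2) r) \<partial>lborel)"
proof -
  define d where "d = real DIM('a)"
  define cB where "cB = (4 * pi) powr (\<alpha> / 2) * Gamma (\<alpha> / 2)"
  have cB: "0 \<le> cB" using Gamma_real_pos[of "\<alpha>/2"] a by (simp add: cB_def)
  have "gauss_mixture (bessel_weight d \<alpha>) bessel_rate x y
      = (\<integral>\<^sup>+r. ennreal cB * ennreal (bessel_integrand d \<alpha> ((norm (x - y))\<^sup>2) r) \<partial>lborel)"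
    unfolding gauss_mixture_def d_def[symmetric]
  proof (intro nn_integral_cong)
    fix r :: real
    show "ennreal (bessel_weight d \<alpha> r * (pi / (4 * bessel_rate r)) powr (d / 2) * exp (- bessel_rate r * (norm (x - y))\<^sup>2))
        = ennreal cB * ennreal (bessel_integrand d \<alpha> ((norm (x - y))\<^sup>2) r)"
    proof (cases "r > 0")
      case True
      have rate: "pi / (4 * bessel_rate r) = pi * r" "- bessel_rate r * (norm (x - y))\<^sup>2 = - (norm (x - y))\<^sup>2 / (4 * r)"
        using True by (simp_all add: bessel_rate_def)
      have cancel: "(1 / (pi * r)) powr (d / 2) * (pi * r) powr (d / 2) = 1"
        using True by (simp add: powr_mult[symmetric])
      have "bessel_weight d \<alpha> r * (pi / (4 * bessel_rate r)) powr (d / 2) * exp (- bessel_rate r * (norm (x - y))\<^sup>2)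
          = cB * bessel_integrand d \<alpha> ((norm (x - y))\<^sup>2) r * ((1 / (pi * r)) powr (d / 2) * (pi * r) powr (d / 2))"
        unfolding rate bessel_weight_def bessel_integrand_def cB_def using True by (simp add: mult_ac)
      then have "bessel_weight d \<alpha> r * (pi / (4 * bessel_rate r)) powr (d / 2) * exp (- bessel_rate r * (norm (x - y))\<^sup>2)
          = cB * bessel_integrand d \<alpha> ((norm (x - y))\<^sup>2) r"
        by (simp only: cancel mult_1_right)
      then show ?thesis using cB bessel_integrand_nonneg by (simp add: ennreal_mult)
    qed (simp add: bessel_weight_def bessel_integrand_def)
  qed
  also have "\<dots> = ennreal cB * (\<integral>\<^sup>+r. ennreal (bessel_integrand d \<alpha> ((norm (x - y))\<^sup>2) r) \<partial>lborel)"
    by (rule nn_integral_cmult) simp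
  finally show ?thesis by (simp add: d_def cB_def)
qed

lemma power_div_fact_le_exp:
  fixes y :: real assumes "0 \<le> y"
  shows "y ^ k / fact k \<le> exp y"
proof -
  have "summable (\<lambda>n. y ^ n / fact n)"
    using summable_exp[of y] by (simp add: divide_inverse mult.commute)
  from sum_le_suminf[OF this, of "{k}"] have "y ^ k / fact k \<le> (\<Sum>n. y ^ n / fact n)"
    using assms by simp
  then show ?thesis by (simp add: exp_def divide_inverse scaleR_conv_of_real mult.commute)
qed

text \<open>\<open>exp (- c / (4 r))\<close> vanishes faster than any power of \<open>r\<close> as \<open>r \<rightarrow> 0\<close>, which makes the
Bessel integrand integrable at \<open>0\<close> whatever the exponent.\<close>

lemma exp_neg_inverse_le_power:
  fixes c r :: real assumes "0 < c" "0 < r"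
  shows "exp (- c / (4 * r)) \<le> fact k * (4 / c) ^ k * r ^ k"
proof -
  have "(c / (4 * r)) ^ k / fact k \<le> exp (c / (4 * r))"
    using assms by (intro power_div_fact_le_exp) simp
  then have "exp (- c / (4 * r)) \<le> fact k / (c / (4 * r)) ^ k"
    using assms by (simp add: exp_minus field_simps)
  also have "\<dots> = fact k * (4 / c) ^ k * r ^ k"
    using assms by (simp add: power_divide field_simps)
  finally show ?thesis .
qed

lemma nn_integral_bessel_integrand_finite:
  assumes c: "c > 0"
  shows "(\<integral>\<^sup>+r. ennreal (bessel_integrand d \<alpha> c r) \<partial>lborel) < \<infinity>"
proof -
  define p where "p = (\<alpha> - d) / 2 - 1"
  define k where "k = nat \<lceil>- p\<rceil>"
  define s where "s = p + real k + 1"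
  define M where "M = fact k * (4 / c) ^ k"
  have s: "s > 0" unfolding s_def k_def by linarith
  have M: "M > 0" using c by (simp add: M_def)
  have "bessel_integrand d \<alpha> c r \<le> M * (indicator {0<..} r * r powr (s - 1) * exp (- (1 * r)))" for r
  proof (cases "r > 0")
    case True
    have "bessel_integrand d \<alpha> c r = r powr p * exp (- r) * exp (- c / (4 * r))"
      using True by (simp add: bessel_integrand_def p_def)
    also have "\<dots> \<le> r powr p * exp (- r) * (M * r ^ k)"
      unfolding M_def using exp_neg_inverse_le_power[OF c True] by (intro mult_left_mono) simp_all
    also have "\<dots> = M * (r powr p * r ^ k) * exp (- r)" by (simp add: ac_simps)
    also have "r powr p * r ^ k = r powr (s - 1)"
      using True by (simp add: s_def powr_add powr_realpow)
    finally show ?thesis using True by (simp add: ac_simps)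
  qed (simp add: bessel_integrand_def)
  then have "(\<integral>\<^sup>+r. ennreal (bessel_integrand d \<alpha> c r) \<partial>lborel)
      \<le> (\<integral>\<^sup>+r. ennreal M * ennreal (indicator {0<..} r * r powr (s - 1) * exp (- (1 * r))) \<partial>lborel)"
    using M by (intro nn_integral_mono) (simp add: ennreal_mult[symmetric])
  also have "\<dots> = ennreal M * ennreal (Gamma s * 1 powr (- s))"
    by (subst nn_integral_cmult, simp, subst nn_integral_Gamma_scaled[OF s], simp_all)
  also have "\<dots> < \<infinity>" by (simp add: ennreal_mult_less_top)
  finally show ?thesis .
qed

lemma bessel_eq_integral:
  fixes w :: "'a::euclidean_space"
  shows "bessel \<alpha> w = (4 * pi) powr (\<alpha> / 2) * Gamma (\<alpha> / 2) * (\<integral>r. bessel_integrand (real DIM('a)) \<alpha> ((norm w)\<^sup>2) r \<partial>lborel)"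
  unfolding bessel_def Let_def set_lebesgue_integral_def bessel_integrand_def by simp

lemma bessel_nonneg: "0 < \<alpha> \<Longrightarrow> 0 \<le> bessel \<alpha> w"
  unfolding bessel_eq_integral using Gamma_real_pos[of "\<alpha>/2"]
  by (simp add: bessel_integrand_nonneg)

lemma bessel_le_gauss_mixture:
  fixes x y :: "'a::euclidean_space"
  assumes a: "0 < \<alpha>"
  shows "ennreal (bessel \<alpha> (x - y)) \<le> gauss_mixture (bessel_weight (real DIM('a)) \<alpha>) bessel_rate x y"
    and "x \<noteq> y \<Longrightarrow> ennreal (bessel \<alpha> (x - y)) = gauss_mixture (bessel_weight (real DIM('a)) \<alpha>) bessel_rate x y"
proof -
  define h where "h = bessel_integrand (real DIM('a)) \<alpha> ((norm (x - y))\<^sup>2)"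
  define cB where "cB = (4 * pi) powr (\<alpha> / 2) * Gamma (\<alpha> / 2)"
  have cB: "cB > 0" using a Gamma_real_pos[of "\<alpha>/2"] by (simp add: cB_def)
  have G: "gauss_mixture (bessel_weight (real DIM('a)) \<alpha>) bessel_rate x y = ennreal cB * (\<integral>\<^sup>+r. ennreal (h r) \<partial>lborel)"
    unfolding h_def cB_def by (rule gauss_mixture_bessel_weight[OF a])
  have b: "bessel \<alpha> (x - y) = cB * (\<integral>r. h r \<partial>lborel)"
    unfolding h_def cB_def by (rule bessel_eq_integral)
  have h0: "0 \<le> h r" for r by (simp add: h_def bessel_integrand_nonneg)
  have i0: "0 \<le> (\<integral>r. h r \<partial>lborel)" by (simp add: h0)
  have "ennreal (\<integral>r. h r \<partial>lborel) \<le> (\<integral>\<^sup>+r. ennreal (h r) \<partial>lborel)"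
    by (cases "integrable lborel h") (simp_all add: nn_integral_eq_integral h0 not_integrable_integral_eq)
  then show "ennreal (bessel \<alpha> (x - y)) \<le> gauss_mixture (bessel_weight (real DIM('a)) \<alpha>) bessel_rate x y"
    unfolding G b using cB i0 by (simp add: ennreal_mult mult_left_mono)
  assume "x \<noteq> y"
  then have "(\<integral>\<^sup>+r. ennreal (h r) \<partial>lborel) < \<infinity>"
    unfolding h_def by (intro nn_integral_bessel_integrand_finite) simp
  then have "integrable lborel h"
    by (intro integrableI_nonneg) (simp_all add: h_def bessel_integrand_nonneg)
  then have "ennreal (\<integral>r. h r \<partial>lborel) = (\<integral>\<^sup>+r. ennreal (h r) \<partial>lborel)"
    by (simp add: nn_integral_eq_integral h0)
  then show "ennreal (bessel \<alpha> (x - y)) = gauss_mixture (bessel_weight (real DIM('a)) \<alpha>) bessel_rate x y"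
    unfolding G b using cB i0 by (simp add: ennreal_mult)
qed

subsection \<open>The bounds for the four kernels\<close>

lemma heatk_bounded: "0 < \<alpha> \<Longrightarrow> 0 \<le> heatk \<alpha> w \<and> heatk \<alpha> (w::'a::euclidean_space) \<le> (2 * pi * \<alpha>) powr (- (real DIM('a) / 2))"
  unfolding heatk_def by (auto intro: mult_left_le)

lemma poisson_bounded:
  fixes w :: "'a::euclidean_space"
  assumes "0 < \<alpha>"
  defines "d \<equiv> real DIM('a)"
  shows "0 \<le> poisson \<alpha> w \<and> poisson \<alpha> w \<le> pi powr (- (d + 1) / 2) * Gamma ((d + 1) / 2) * \<alpha> * (\<alpha>\<^sup>2) powr (- (d + 1) / 2)"
proof -
  have "0 < Gamma ((d + 1) / 2)" by (rule Gamma_real_pos) (simp add: d_def)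
  moreover have "((norm w)\<^sup>2 + \<alpha>\<^sup>2) powr (- (d + 1) / 2) \<le> (\<alpha>\<^sup>2) powr (- (d + 1) / 2)"
    by (rule powr_mono2') (use assms in \<open>auto simp: d_def\<close>)
  ultimately show ?thesis
    unfolding poisson_def Let_def d_def[symmetric] using assms by (simp add: mult_left_mono)
qed

lemma psi_riesz_le:
  fixes x :: "'a::euclidean_space"
  assumes a: "0 < \<alpha>" "\<alpha> < real DIM('a)" and "0 \<le> D"
    and "\<And>u (y :: 'a) z. 0 < u \<Longrightarrow> Jf (riesz \<alpha>) u u y z \<le> ennreal (D * (2 * u) powr e)"
    and "admissible n T s" "admissible n T t"
  shows "psi (riesz \<alpha>) n T x s t \<le> ennreal ((D * 2 powr e) ^ n * (beta n T s * beta n T t) powr (e / 2))"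
  by (rule psi_le_beta_powr_of_gauss_mixture[OF riesz_weight_nonneg[OF a(1)] riesz_weight_nonzero_imp_pos
        borel_measurable_riesz_weight measurable_ident_sets[OF refl] riesz_nonneg[OF a]
        riesz_le_gauss_mixture[OF a] riesz_eq_gauss_mixture[OF a] assms(3-)])

lemma psi_bessel_le:
  fixes x :: "'a::euclidean_space"
  assumes a: "0 < \<alpha>" and "0 \<le> D"
    and "\<And>u (y :: 'a) z. 0 < u \<Longrightarrow> Jf (bessel \<alpha>) u u y z \<le> ennreal (D * (2 * u) powr e)"
    and "admissible n T s" "admissible n T t"
  shows "psi (bessel \<alpha>) n T x s t \<le> ennreal ((D * 2 powr e) ^ n * (beta n T s * beta n T t) powr (e / 2))"
  by (rule psi_le_beta_powr_of_gauss_mixture[OF bessel_weight_nonneg[OF a] bessel_weight_nonzero_imp_rate_pos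
        borel_measurable_bessel_weight borel_measurable_bessel_rate bessel_nonneg[OF a]
        bessel_le_gauss_mixture[OF a] assms(2-)])

theorem lemma3p4:
  fixes \<alpha> :: real
  shows
  "(\<forall>(f :: 'a::euclidean_space \<Rightarrow> real) D.
      (f = riesz \<alpha> \<or> f = bessel \<alpha>) \<and> 0 < \<alpha> \<and> \<alpha> < real DIM('a) \<and> 0 < D \<and>
      (\<forall>u v (y :: 'a) z. 0 < u \<longrightarrow> 0 < v \<longrightarrow>
         Jf f u v y z \<le> ennreal (D * (u + v) powr (- (real DIM('a) - \<alpha>) / 2)))
      \<longrightarrow> (\<forall>n T (x :: 'a) s t. 1 \<le> n \<longrightarrow> 0 < T \<longrightarrow> admissible n T s \<longrightarrow> admissible n T t \<longrightarrow>
            psi f n T x s t \<le>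
              ennreal ((D * 2 powr (- (real DIM('a) - \<alpha>) / 2)) ^ n
                * (beta n T s * beta n T t) powr (- (real DIM('a) - \<alpha>) / 4))))
   \<and>
   (\<forall>f :: 'a \<Rightarrow> real. (f = heatk \<alpha> \<or> f = poisson \<alpha>) \<and> 0 < \<alpha> \<longrightarrow>
      (\<exists>C :: real. \<forall>n T (x :: 'a) s t. 1 \<le> n \<longrightarrow> 0 < T \<longrightarrow> admissible n T s \<longrightarrow> admissible n T t \<longrightarrow>
            psi f n T x s t \<le> ennreal (C ^ n)))"
proof (intro conjI allI impI, goal_cases singular bounded)
  case (singular f D n T x s t)
  define e where "e = - (real DIM('a) - \<alpha>) / 2"
  have a: "0 < \<alpha>" "\<alpha> < real DIM('a)" and D: "0 \<le> D" and adm: "admissible n T s" "admissible n T t"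
    using singular by simp_all
  have J: "Jf f u u y z \<le> ennreal (D * (2 * u) powr e)" if "0 < u" for u y z
    using singular that unfolding e_def mult_2 by blast
  have "f = riesz \<alpha> \<or> f = bessel \<alpha>" using singular by simp
  then have "psi f n T x s t \<le> ennreal ((D * 2 powr e) ^ n * (beta n T s * beta n T t) powr (e / 2))"
  proof
    assume f: "f = riesz \<alpha>"
    show ?thesis unfolding f by (rule psi_riesz_le[OF a D J[unfolded f] adm])
  next
    assume f: "f = bessel \<alpha>"
    show ?thesis unfolding f by (rule psi_bessel_le[OF a(1) D J[unfolded f] adm])
  qed
  then show ?case by (simp add: e_def)
next
  case (bounded f)
  then obtain c where "\<And>w. 0 \<le> f w" "\<And>w. f w \<le> c"
    using heatk_bounded poisson_bounded by metis
  then show ?case using psi_le_power_of_bounded by blast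
qed

end
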